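(* Let $d\ge 4$ be even, $n=\frac{d^2}{2}$, and consider the $[[d^2,2,d]]$ generalized bicycle code defined by $a(x)=1+x$, $b(x)=1+x^{d+1}$. If all syndrome extractions are performed using the RL pattern, the effective distance of the code is $d$.
   Context: $R_n=\mathbb{F}_2[x]/\langle x^n-1\rangle$, vectors of $\mathbb{F}_2^{2n}$ are pairs $(u,v)$ of elements of $R_n$ (left half, right half), weight = number of nonzero coefficients. Code spaces: $C_2=\{(c(1+x),c(1+x^{d+1}))\}$ (X-stabilizers), $C_1=\{(u,v):u(1+x^{d+1})+v(1+x)=0\}$, $C_2'=\{(c(1+x^{-(d+1)}),c(1+x^{-1}))\}$ (Z-stabilizers), $C_1'=\{(u,v):u(1+x^{-1})+v(1+x^{-(d+1)})=0\}$, $x^{-1}=x^{n-1}$; undetectable X- (resp. Z-) logical errors are elements of $C_1\setminus C_2$ (resp. $C_1'\setminus C_2'$). Each check $x^i(1+x,1+x^{d+1})$ and $x^i(1+x^{-(d+1)},1+x^{-1})$ is measured with one ancilla via four CNOTs. In the RL pattern the ancilla first interacts with the check's two right-half qubits and then with its two left-half qubits, so a single ancilla fault between the two halves propagates to errors of the check's type on its two left-half qubits, i.e. $(x^i(1+x),0)$ for X-checks and $(x^i(1+x^{-(d+1)}),0)$ for Z-checks; any other single ancilla fault is equivalent to at most one data-qubit error. The effective distance is the minimum of $\mathrm{wt}(j)+\mathrm{wt}(u)+\mathrm{wt}(v)$ over $j,u,v\in R_n$ with $(u+j(x)(1+x),v)\in C_1\setminus C_2$ or $(u+j(x)(1+x^{-(d+1)}),v)\in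 C_1'\setminus C_2'$. *)

theory Defs
  imports Main
begin

text \<open>Elements of R_n = F_2[x]/(x^n - 1) are represented by their supports:
  the set of exponents in {0..<n} having coefficient 1.\<close>

definition Rn :: "nat \<Rightarrow> nat set set" where
  "Rn n = Pow {0..<n}"

definition wt :: "nat set \<Rightarrow> nat" where
  "wt p = card p"

definition radd :: "nat set \<Rightarrow> nat set \<Rightarrow> nat set" where
  "radd p q = (p - q) \<union> (q - p)"

definition rmul :: "nat \<Rightarrow> nat set \<Rightarrow> nat set \<Rightarrow> nat set" where
  "rmul n p q = {k. k < n \<and> odd (card {(i, j). i \<in> p \<and> j \<in> q \<and> (i + j) mod n = k})}"

definition xpow :: "nat \<Rightarrow> nat \<Rightarrow> nat set" where
  "xpow n k = {k mod n}"

definition xinvpow :: "nat \<Rightarrow> nat \<Rightarrow> nat set" where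
  "xinvpow n k = {(n - k mod n) mod n}"

definition rone :: "nat \<Rightarrow> nat set" where
  "rone n = xpow n 0"

text \<open>X-stabilizer and X-logical spaces.\<close>
definition C2 :: "nat \<Rightarrow> nat \<Rightarrow> (nat set \<times> nat set) set" where
  "C2 n d = {(rmul n c (radd (rone n) (xpow n 1)), rmul n c (radd (rone n) (xpow n (d + 1)))) | c. c \<in> Rn n}"

definition C1 :: "nat \<Rightarrow> nat \<Rightarrow> (nat set \<times> nat set) set" where
  "C1 n d = {(u, v). u \<in> Rn n \<and> v \<in> Rn n \<and>
     radd (rmul n u (radd (rone n) (xpow n (d + 1)))) (rmul n v (radd (rone n) (xpow n 1))) = {}}"

text \<open>Z-stabilizer and Z-logical spaces.\<close>
definition C2' :: "nat \<Rightarrow> nat \<Rightarrow> (nat set \<times> nat set) set" where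
  "C2' n d = {(rmul n c (radd (rone n) (xinvpow n (d + 1))), rmul n c (radd (rone n) (xinvpow n 1))) | c. c \<in> Rn n}"

definition C1' :: "nat \<Rightarrow> nat \<Rightarrow> (nat set \<times> nat set) set" where
  "C1' n d = {(u, v). u \<in> Rn n \<and> v \<in> Rn n \<and>
     radd (rmul n u (radd (rone n) (xinvpow n 1))) (rmul n v (radd (rone n) (xinvpow n (d + 1)))) = {}}"

definition eff_weights :: "nat \<Rightarrow> nat \<Rightarrow> nat set" where
  "eff_weights n d = {wt j + wt u + wt v | j u v. j \<in> Rn n \<and> u \<in> Rn n \<and> v \<in> Rn n \<and>
     ((radd u (rmul n j (radd (rone n) (xpow n 1))), v) \<in> C1 n d - C2 n d \<or>
      (radd u (rmul n j (radd (rone n) (xinvpow n (d + 1)))), v) \<in> C1' n d - C2' n d)}"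

definition eff_dist :: "nat \<Rightarrow> nat \<Rightarrow> nat" where
  "eff_dist n d = Min (eff_weights n d)"

end

theory Submission
  imports Defs "HOL-Library.Z2" "HOL-Number_Theory.Cong"
begin

text \<open>Elements of \<open>R\<^sub>n\<close> are encoded by their \<open>n\<close>-periodic coefficient functions
  \<open>\<int> \<rightarrow> \<bbbF>\<^sub>2\<close>, on which multiplication by \<open>x\<^sup>t\<close> is a shift; X-logical operators and
  stabilizers are called cycles and boundaries, Z-logical operators cocycles. Let \<open>d = 2 m\<close>,
  \<open>n = 2 m\<^sup>2\<close> and \<open>s = d + 1\<close>. Modulo boundaries, every cycle is \<open>p (\<delta>\<^sub>0, \<chi>) + w (0, 1)\<close>
  with \<open>\<chi>\<close> the indicator of \<open>{0, \<dots>, s - 1}\<close>, and it is nontrivial iff \<open>(p, w) \<noteq> 0\<close>. Its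
  pairing with a cocycle is invariant under cyclic shifts of the cocycle. Hence, if
  \<open>(u + j (1 + x), v)\<close> is a nontrivial cycle and the cocycle \<open>(a, b)\<close> pairs oddly with it, each
  of the \<open>n\<close> shifts of \<open>(a, b)\<close> meets \<open>u\<close>, \<open>v\<close> or \<open>j (1 + x)\<close>, and counting gives
  \<open>n \<le> |a| |u| + |b| |v| + 2 |j|\<close> when \<open>a\<close> is an interval. Three cocycles, intervals \<open>a\<^sub>i\<close>
  with arithmetic progressions \<open>b\<^sub>i\<close> of step \<open>s\<close>, give inequalities that combine to
  \<open>|j| + |u| + |v| \<ge> d\<close>. Z-type faults reduce to X-type faults under \<open>x \<mapsto> x\<^sup>-\<^sup>1\<close>, and the
  bound is attained by a cycle of weight \<open>d\<close> with \<open>j = 0\<close>.\<close>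

lemma bit_add_self [simp]: "(x::bit) + x = 0"
  by (cases x) simp_all

lemma bit_add_self_left [simp]: "(x::bit) + (x + y) = y"
  by (cases x; cases y) simp_all

lemmas bit_cancel = ac_simps bit_add_self bit_add_self_left add_0_left add_0_right

lemma of_bool_neq_bit: "(of_bool (P \<noteq> Q) :: bit) = of_bool P + of_bool Q"
  by (cases P; cases Q) simp_all

lemma bit_add_eq_0_iff: "(a::bit) + b = 0 \<longleftrightarrow> a = b"
  by (cases a; cases b) simp_all

lemma sum_bit_eq_one_imp_ex: "(\<Sum>k\<in>K. f k) = (1::bit) \<Longrightarrow> \<exists>k\<in>K. f k = 1"
  by (metis (mono_tags, lifting) bit_not_one_iff sum.neutral zero_neq_one)

lemma bit_add3_eq_one: "(a::bit) + b + c = 1 \<Longrightarrow> a = 1 \<or> b = 1 \<or> c = 1"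
  by (cases a; cases b; cases c) simp_all

section \<open>Periodic coefficient functions\<close>

definition periodic :: "nat \<Rightarrow> (int \<Rightarrow> 'a) \<Rightarrow> bool" where
  "periodic n F \<longleftrightarrow> (\<forall>k. F (k mod int n) = F k)"

lemma periodic_add: "periodic n F \<Longrightarrow> periodic n G \<Longrightarrow> periodic n (\<lambda>k. F k + G k)"
  by (simp add: periodic_def)

lemma periodic_mult: "periodic n F \<Longrightarrow> periodic n G \<Longrightarrow> periodic n (\<lambda>k. F k * G k)"
  by (simp add: periodic_def)

lemma periodic_const: "periodic n (\<lambda>k. c)"
  by (simp add: periodic_def)

lemma periodic_shift:
  assumes "periodic n F"
  shows "periodic n (\<lambda>k. F (k + c))"
  unfolding periodic_def
proof
  fix k
  have "F (k mod int n + c) = F ((k mod int n + c) mod int n)"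
    using assms by (simp add: periodic_def)
  also have "\<dots> = F ((k + c) mod int n)"
    by (simp add: mod_add_left_eq)
  also have "\<dots> = F (k + c)"
    using assms by (simp add: periodic_def)
  finally show "F (k mod int n + c) = F (k + c)" .
qed

lemma periodic_shift_diff: "periodic n F \<Longrightarrow> periodic n (\<lambda>k. F (k - c))"
  using periodic_shift[of n F "- c"] by simp

lemma periodic_reflect: "periodic n F \<Longrightarrow> periodic n (\<lambda>k. F (- k))"
  unfolding periodic_def by (metis mod_minus_eq)

definition period_sum :: "nat \<Rightarrow> (int \<Rightarrow> 'a::comm_monoid_add) \<Rightarrow> 'a" where
  "period_sum n g = (\<Sum>k\<in>{0..<int n}. g k)"

lemma period_sum_add: "period_sum n (\<lambda>k. f k + g k) = period_sum n f + period_sum n g"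
  by (simp only: period_sum_def sum.distrib)

lemma period_sum_cmult: "period_sum n (\<lambda>k. c * f k) = (c::'a::semiring_0) * period_sum n f"
  by (simp only: period_sum_def sum_distrib_left)

lemma period_sum_shift:
  assumes n: "n > 0" and g: "periodic n g"
  shows "period_sum n (\<lambda>k. g (k + c)) = period_sum n g"
proof -
  let ?h = "\<lambda>k. (k + c) mod int n"
  have bij: "bij_betw ?h {0..<int n} {0..<int n}"
    by (rule bij_betw_byWitness[where f' = "\<lambda>k. (k - c) mod int n"])
      (use n in \<open>auto simp: mod_diff_left_eq mod_add_left_eq\<close>)
  have "period_sum n g = (\<Sum>k\<in>{0..<int n}. g (?h k))"
    unfolding period_sum_def using sum.reindex_bij_betw[OF bij, of g] by simp
  also have "\<dots> = period_sum n (\<lambda>k. g (k + c))"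
    using g by (simp add: periodic_def period_sum_def)
  finally show ?thesis by simp
qed

text \<open>The coefficient function of \<open>p \<in> R\<^sub>n\<close>, extended \<open>n\<close>-periodically to the integers,
  so that multiplication by \<open>x\<^sup>t\<close> becomes the shift \<open>k \<mapsto> k - t\<close>.\<close>

definition coeff_fun :: "nat \<Rightarrow> nat set \<Rightarrow> int \<Rightarrow> bit" where
  "coeff_fun n p k = of_bool (nat (k mod int n) \<in> p)"

definition support_of :: "nat \<Rightarrow> (int \<Rightarrow> bit) \<Rightarrow> nat set" where
  "support_of n F = {k. k < n \<and> F (int k) = 1}"

lemma periodic_coeff_fun: "periodic n (coeff_fun n p)"
  by (simp add: periodic_def coeff_fun_def)

lemma coeff_fun_nat: "k < n \<Longrightarrow> coeff_fun n p (int k) = of_bool (k \<in> p)"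
  by (simp add: coeff_fun_def)

lemma coeff_fun_add_period: "coeff_fun n p (k + int n) = coeff_fun n p k"
  by (simp add: coeff_fun_def)

lemma coeff_fun_support_of:
  assumes n: "n > 0" and F: "periodic n F"
  shows "coeff_fun n (support_of n F) = F"
proof
  fix k
  have "coeff_fun n (support_of n F) k = of_bool (F (int (nat (k mod int n))) = 1)"
    using n by (simp add: coeff_fun_def support_of_def nat_less_iff)
  also have "int (nat (k mod int n)) = k mod int n"
    using n by simp
  finally show "coeff_fun n (support_of n F) k = F k"
    using F by (cases "F k") (simp_all add: periodic_def)
qed

lemma support_of_subset: "support_of n F \<subseteq> {0..<n}"
  by (auto simp: support_of_def)

lemma coeff_fun_inject:
  assumes "p \<subseteq> {0..<n}" "q \<subseteq> {0..<n}" "coeff_fun n p = coeff_fun n q"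
  shows "p = q"
proof -
  have "(k \<in> p) = (k \<in> q)" if "k < n" for k
    using assms(3) that by (metis of_bool_eq_iff coeff_fun_nat)
  then show ?thesis
    using assms(1,2) by auto
qed

lemma empty_iff_coeff_fun_eq_0:
  assumes "p \<subseteq> {0..<n}"
  shows "p = {} \<longleftrightarrow> coeff_fun n p = (\<lambda>k. 0)"
proof
  assume "coeff_fun n p = (\<lambda>k. 0)"
  moreover have "coeff_fun n {} = (\<lambda>k. 0)"
    by (simp add: coeff_fun_def fun_eq_iff)
  ultimately show "p = {}"
    using coeff_fun_inject[OF assms, of "{}"] by simp
qed (simp add: coeff_fun_def fun_eq_iff)

lemma period_sum_coeff_fun_mult:
  assumes "p \<subseteq> {0..<n}"
  shows "period_sum n (\<lambda>k. coeff_fun n p k * G k) = (\<Sum>k\<in>p. G (int k))"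
proof -
  have "period_sum n (\<lambda>k. coeff_fun n p k * G k) = (\<Sum>k\<in>int ` {0..<n}. coeff_fun n p k * G k)"
    by (simp add: period_sum_def image_int_atLeastLessThan)
  also have "\<dots> = (\<Sum>k\<in>{0..<n}. coeff_fun n p (int k) * G (int k))"
    by (subst sum.reindex) auto
  also have "\<dots> = (\<Sum>k\<in>{0..<n}. if k \<in> p then G (int k) else 0)"
    by (rule sum.cong) (auto simp: coeff_fun_nat)
  also have "\<dots> = (\<Sum>k\<in>p. G (int k))"
    using assms by (simp add: sum.If_cases Int_absorb1)
  finally show ?thesis .
qed

lemma sum_coeff_fun_initial_segment:
  assumes "s \<le> n"
  shows "(\<Sum>k\<in>{0..<int s}. coeff_fun n b k) = of_nat (card (b \<inter> {0..<s}))"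
proof -
  have "(\<Sum>k\<in>{0..<int s}. coeff_fun n b k) = (\<Sum>k\<in>int ` {0..<s}. coeff_fun n b k)"
    by (simp add: image_int_atLeastLessThan)
  also have "\<dots> = (\<Sum>k\<in>{0..<s}. coeff_fun n b (int k))"
    by (subst sum.reindex) auto
  also have "\<dots> = (\<Sum>k\<in>{0..<s}. of_bool (k \<in> b))"
    by (rule sum.cong) (use assms in \<open>auto simp: coeff_fun_nat\<close>)
  also have "\<dots> = of_nat (card (b \<inter> {0..<s}))"
    by (simp add: Int_def conj_commute)
  finally show ?thesis .
qed

lemma sum_coeff_fun_nat:
  assumes "q \<subseteq> {0..<n}"
  shows "(\<Sum>k\<in>q. coeff_fun n p (int k)) = of_nat (card (q \<inter> p))"
proof -
  have "(\<Sum>k\<in>q. coeff_fun n p (int k)) = (\<Sum>k\<in>q. of_bool (k \<in> p))"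
    by (rule sum.cong) (use assms in \<open>auto simp: coeff_fun_nat\<close>)
  also have "\<dots> = of_nat (card (q \<inter> p))"
    using finite_subset[OF assms] by (simp add: Int_def)
  finally show ?thesis .
qed

lemma period_sum_coeff_fun:
  assumes "b \<subseteq> {0..<n}"
  shows "period_sum n (coeff_fun n b) = of_nat (card b)"
proof -
  have "period_sum n (\<lambda>k. coeff_fun n b k * 1) = (\<Sum>k\<in>b. 1)"
    by (rule period_sum_coeff_fun_mult[OF assms])
  then show ?thesis
    by (simp only: mult_1_right sum_constant)
qed

lemma coeff_fun_radd: "coeff_fun n (radd p q) k = coeff_fun n p k + coeff_fun n q k"
  by (simp add: coeff_fun_def radd_def of_bool_neq_bit[symmetric])

lemma radd_subset: "p \<subseteq> {0..<n} \<Longrightarrow> q \<subseteq> {0..<n} \<Longrightarrow> radd p q \<subseteq> {0..<n}"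
  by (auto simp: radd_def)

lemma rmul_subset: "rmul n p q \<subseteq> {0..<n}"
  by (auto simp: rmul_def)

lemma radd_rone_xpow: "0 < r \<Longrightarrow> r < n \<Longrightarrow> radd (rone n) (xpow n r) = {0, r}"
  by (auto simp: radd_def rone_def xpow_def)

lemma radd_rone_xinvpow: "0 < r \<Longrightarrow> r < n \<Longrightarrow> radd (rone n) (xinvpow n r) = {0, n - r}"
  by (auto simp: radd_def rone_def xinvpow_def xpow_def)

lemma add_mod_eq_iff_eq_diff_mod:
  assumes "i < n" "k < n"
  shows "(i + t) mod n = k \<longleftrightarrow> i = nat ((int k - int t) mod int n)"
proof -
  have "(i + t) mod n = k \<longleftrightarrow> (int i + int t) mod int n = int k"
    by (metis of_nat_add of_nat_eq_iff zmod_int)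
  also have "\<dots> \<longleftrightarrow> int i = (int k - int t) mod int n"
  proof
    assume h: "(int i + int t) mod int n = int k"
    have "(int k - int t) mod int n = ((int i + int t) mod int n - int t) mod int n"
      using h by simp
    also have "\<dots> = int i"
      using assms by (simp add: mod_diff_left_eq)
    finally show "int i = (int k - int t) mod int n" by simp
  next
    assume h: "int i = (int k - int t) mod int n"
    have "(int i + int t) mod int n = ((int k - int t) mod int n + int t) mod int n"
      using h by simp
    also have "\<dots> = int k"
      using assms by (simp add: mod_add_left_eq)
    finally show "(int i + int t) mod int n = int k" .
  qed
  also have "\<dots> \<longleftrightarrow> i = nat ((int k - int t) mod int n)"
    using assms by (metis int_nat_eq nat_int pos_mod_sign of_nat_0_less_iff less_nat_zero_code
        not_gr_zero)
  finally show ?thesis .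
qed

lemma rmul_binomial_mem:
  assumes p: "p \<subseteq> {0..<n}" and t: "0 < t" "t < n" and k: "k < n"
  shows "k \<in> rmul n p {0, t} \<longleftrightarrow> (k \<in> p) \<noteq> (nat ((int k - int t) mod int n) \<in> p)"
proof -
  define r where "r = nat ((int k - int t) mod int n)"
  have eq: "{(i, j). i \<in> p \<and> j \<in> {0, t} \<and> (i + j) mod n = k} =
        (if k \<in> p then {(k, 0)} else {}) \<union> (if r \<in> p then {(r, t)} else {})"
  proof (rule set_eqI)
    fix x :: "nat \<times> nat"
    obtain i j where x: "x = (i, j)" by (cases x)
    show "x \<in> {(i, j). i \<in> p \<and> j \<in> {0, t} \<and> (i + j) mod n = k} \<longleftrightarrow>
       x \<in> (if k \<in> p then {(k, 0)} else {}) \<union> (if r \<in> p then {(r, t)} else {})"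
    proof (cases "i \<in> p")
      case True
      then have i: "i < n" using p by auto
      have "i mod n = k \<longleftrightarrow> i = k" using i k by auto
      moreover have "(i + t) mod n = k \<longleftrightarrow> i = r"
        using add_mod_eq_iff_eq_diff_mod[OF i k, of t] by (simp add: r_def)
      ultimately show ?thesis
        using True t unfolding x by (cases "j = 0"; cases "j = t") auto
    next
      case False
      then show ?thesis unfolding x by auto
    qed
  qed
  have "card {(i, j). i \<in> p \<and> j \<in> {0, t} \<and> (i + j) mod n = k} = of_bool (k \<in> p) + of_bool (r \<in> p)"
    unfolding eq using t by (auto simp: card_insert_if)
  then show ?thesis
    unfolding rmul_def r_def using k by auto
qed

lemma coeff_fun_rmul_binomial:
  assumes p: "p \<subseteq> {0..<n}" and t: "0 < t" "t < n"
  shows "coeff_fun n (rmul n p {0, t}) k = coeff_fun n p k + coeff_fun n p (k - int t)"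
proof -
  define k' where "k' = nat (k mod int n)"
  have k': "k' < n" "int k' = k mod int n"
    using t by (auto simp: k'_def nat_less_iff)
  have "nat ((int k' - int t) mod int n) = nat ((k - int t) mod int n)"
    using k' by (simp add: mod_diff_left_eq)
  then show ?thesis
    using rmul_binomial_mem[OF p t k'(1)] unfolding coeff_fun_def k'_def[symmetric]
    by (simp add: of_bool_neq_bit[symmetric])
qed

lemma coeff_fun_rmul_binomial_inv:
  assumes p: "p \<subseteq> {0..<n}" and t: "0 < t" "t < n"
  shows "coeff_fun n (rmul n p {0, n - t}) k = coeff_fun n p k + coeff_fun n p (k + int t)"
proof -
  have "coeff_fun n (rmul n p {0, n - t}) k = coeff_fun n p k + coeff_fun n p (k + int t - int n)"
    using coeff_fun_rmul_binomial[OF p, of "n - t" k] t by (simp add: of_nat_diff algebra_simps)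
  then show ?thesis
    using coeff_fun_add_period[of n p "k + int t - int n"] by simp
qed

lemma coeff_fun_radd_rmul_binomial:
  assumes "j \<subseteq> {0..<n}" "0 < t" "t < n"
  shows "coeff_fun n (radd u (rmul n j {0, t})) =
    (\<lambda>k. coeff_fun n u k + coeff_fun n j k + coeff_fun n j (k - int t))"
  by (intro ext) (simp only: coeff_fun_radd coeff_fun_rmul_binomial[OF assms] add.assoc)

lemma coeff_fun_radd_rmul_binomial_inv:
  assumes "j \<subseteq> {0..<n}" "0 < t" "t < n"
  shows "coeff_fun n (radd u (rmul n j {0, n - t})) =
    (\<lambda>k. coeff_fun n u k + coeff_fun n j k + coeff_fun n j (k + int t))"
  by (intro ext) (simp only: coeff_fun_radd coeff_fun_rmul_binomial_inv[OF assms] add.assoc)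

section \<open>Cycles, cocycles and the pairing\<close>

text \<open>With \<open>s = d + 1\<close>, \<open>cycle s U V\<close> encodes \<open>U(1 + x\<^sup>s) + V(1 + x) = 0\<close> and
  \<open>cocycle s A B\<close> encodes \<open>A(1 + x\<^sup>-\<^sup>1) + B(1 + x\<^sup>-\<^sup>s) = 0\<close>.\<close>

definition cycle :: "int \<Rightarrow> (int \<Rightarrow> bit) \<Rightarrow> (int \<Rightarrow> bit) \<Rightarrow> bool" where
  "cycle s U V \<longleftrightarrow> (\<forall>k. U k + U (k - s) + V k + V (k - 1) = 0)"

definition cocycle :: "int \<Rightarrow> (int \<Rightarrow> bit) \<Rightarrow> (int \<Rightarrow> bit) \<Rightarrow> bool" where
  "cocycle s A B \<longleftrightarrow> (\<forall>k. A k + A (k + 1) + B k + B (k + s) = 0)"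

definition pairing :: "nat \<Rightarrow> (int \<Rightarrow> bit) \<Rightarrow> (int \<Rightarrow> bit) \<Rightarrow> (int \<Rightarrow> bit) \<Rightarrow> (int \<Rightarrow> bit) \<Rightarrow> bit" where
  "pairing n U V A B = period_sum n (\<lambda>k. U k * A k + V k * B k)"

lemma C1_iff_cycle:
  assumes "d + 1 < n"
  shows "(u, v) \<in> C1 n d \<longleftrightarrow>
    u \<subseteq> {0..<n} \<and> v \<subseteq> {0..<n} \<and> cycle (int (d + 1)) (coeff_fun n u) (coeff_fun n v)"
proof -
  have "(u, v) \<in> C1 n d \<longleftrightarrow>
      u \<subseteq> {0..<n} \<and> v \<subseteq> {0..<n} \<and> radd (rmul n u {0, d + 1}) (rmul n v {0, 1}) = {}"
    unfolding C1_def Rn_def using assms by (auto simp: radd_rone_xpow)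
  also have "\<dots> \<longleftrightarrow> u \<subseteq> {0..<n} \<and> v \<subseteq> {0..<n} \<and> cycle (int (d + 1)) (coeff_fun n u) (coeff_fun n v)"
  proof (intro conj_cong refl)
    assume u: "u \<subseteq> {0..<n}" and v: "v \<subseteq> {0..<n}"
    have "coeff_fun n (rmul n u {0, d + 1}) k = coeff_fun n u k + coeff_fun n u (k - int (d + 1))"
      "coeff_fun n (rmul n v {0, 1}) k = coeff_fun n v k + coeff_fun n v (k - 1)" for k
      using assms by (simp_all add: coeff_fun_rmul_binomial[OF u] coeff_fun_rmul_binomial[OF v])
    then show "radd (rmul n u {0, d + 1}) (rmul n v {0, 1}) = {} \<longleftrightarrow>
        cycle (int (d + 1)) (coeff_fun n u) (coeff_fun n v)"
      unfolding empty_iff_coeff_fun_eq_0[OF radd_subset[OF rmul_subset rmul_subset]]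
        fun_eq_iff coeff_fun_radd cycle_def
      by (simp only: add.assoc)
  qed
  finally show ?thesis .
qed

lemma C2_iff_boundary:
  assumes "d + 1 < n" and u: "u \<subseteq> {0..<n}" and v: "v \<subseteq> {0..<n}"
  shows "(u, v) \<in> C2 n d \<longleftrightarrow> (\<exists>C. periodic n C \<and>
    coeff_fun n u = (\<lambda>k. C k + C (k - 1)) \<and> coeff_fun n v = (\<lambda>k. C k + C (k - int (d + 1))))"
proof
  assume "(u, v) \<in> C2 n d"
  then obtain c where c: "c \<subseteq> {0..<n}" "u = rmul n c {0, 1}" "v = rmul n c {0, d + 1}"
    unfolding C2_def Rn_def using assms(1) by (auto simp: radd_rone_xpow)
  then show "\<exists>C. periodic n C \<and>
      coeff_fun n u = (\<lambda>k. C k + C (k - 1)) \<and> coeff_fun n v = (\<lambda>k. C k + C (k - int (d + 1)))"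
    using assms(1) periodic_coeff_fun
    by (intro exI[of _ "coeff_fun n c"]) (simp add: fun_eq_iff coeff_fun_rmul_binomial)
next
  assume "\<exists>C. periodic n C \<and>
      coeff_fun n u = (\<lambda>k. C k + C (k - 1)) \<and> coeff_fun n v = (\<lambda>k. C k + C (k - int (d + 1)))"
  then obtain C where C: "periodic n C" and U: "coeff_fun n u = (\<lambda>k. C k + C (k - 1))"
    and V: "coeff_fun n v = (\<lambda>k. C k + C (k - int (d + 1)))"
    by blast
  let ?c = "support_of n C"
  have c: "?c \<subseteq> {0..<n}" and vc: "coeff_fun n ?c = C"
    using assms(1) C by (simp_all add: support_of_subset coeff_fun_support_of)
  have "u = rmul n ?c {0, 1}" "v = rmul n ?c {0, d + 1}"
    using assms(1) by (auto intro!: coeff_fun_inject[OF u rmul_subset] coeff_fun_inject[OF v rmul_subset]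
        simp: fun_eq_iff coeff_fun_rmul_binomial[OF c] vc U V)
  then show "(u, v) \<in> C2 n d"
    unfolding C2_def Rn_def using assms(1) c by (auto simp: radd_rone_xpow)
qed

lemma C1'_iff_cocycle:
  assumes "d + 1 < n"
  shows "(u, v) \<in> C1' n d \<longleftrightarrow>
    u \<subseteq> {0..<n} \<and> v \<subseteq> {0..<n} \<and> cocycle (int (d + 1)) (coeff_fun n u) (coeff_fun n v)"
proof -
  have "(u, v) \<in> C1' n d \<longleftrightarrow> u \<subseteq> {0..<n} \<and> v \<subseteq> {0..<n} \<and>
      radd (rmul n u {0, n - 1}) (rmul n v {0, n - (d + 1)}) = {}"
    unfolding C1'_def Rn_def using assms by (auto simp: radd_rone_xinvpow)
  also have "\<dots> \<longleftrightarrow> u \<subseteq> {0..<n} \<and> v \<subseteq> {0..<n} \<and> cocycle (int (d + 1)) (coeff_fun n u) (coeff_fun n v)"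
  proof (intro conj_cong refl)
    assume u: "u \<subseteq> {0..<n}" and v: "v \<subseteq> {0..<n}"
    have "coeff_fun n (rmul n u {0, n - 1}) k = coeff_fun n u k + coeff_fun n u (k + 1)"
      "coeff_fun n (rmul n v {0, n - (d + 1)}) k = coeff_fun n v k + coeff_fun n v (k + int (d + 1))"
      for k
      using assms coeff_fun_rmul_binomial_inv[OF u, of 1 k]
        coeff_fun_rmul_binomial_inv[OF v, of "d + 1" k]
      by simp_all
    then show "radd (rmul n u {0, n - 1}) (rmul n v {0, n - (d + 1)}) = {} \<longleftrightarrow>
        cocycle (int (d + 1)) (coeff_fun n u) (coeff_fun n v)"
      unfolding empty_iff_coeff_fun_eq_0[OF radd_subset[OF rmul_subset rmul_subset]]
        fun_eq_iff coeff_fun_radd cocycle_def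
      by (simp only: add.assoc)
  qed
  finally show ?thesis .
qed

lemma C2'_if_coboundary:
  assumes "d + 1 < n" and u: "u \<subseteq> {0..<n}" and v: "v \<subseteq> {0..<n}" and C: "periodic n C"
    and U: "coeff_fun n u = (\<lambda>k. C k + C (k + int (d + 1)))"
    and V: "coeff_fun n v = (\<lambda>k. C k + C (k + 1))"
  shows "(u, v) \<in> C2' n d"
proof -
  let ?c = "support_of n C"
  have c: "?c \<subseteq> {0..<n}" and vc: "coeff_fun n ?c = C"
    using assms(1) C by (simp_all add: support_of_subset coeff_fun_support_of)
  have "u = rmul n ?c {0, n - (d + 1)}" "v = rmul n ?c {0, n - 1}"
    using assms(1) by (auto intro!: coeff_fun_inject[OF u rmul_subset] coeff_fun_inject[OF v rmul_subset]
        simp: fun_eq_iff coeff_fun_rmul_binomial_inv[OF c] vc U V)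
  then show ?thesis
    unfolding C2'_def Rn_def using assms(1) c by (auto simp: radd_rone_xinvpow)
qed

lemma pairing_coeff_fun:
  assumes "u \<subseteq> {0..<n}" "v \<subseteq> {0..<n}"
  shows "pairing n (coeff_fun n u) (coeff_fun n v) (coeff_fun n a) (coeff_fun n b) =
    of_nat (card (u \<inter> a) + card (v \<inter> b))"
  unfolding pairing_def period_sum_add period_sum_coeff_fun_mult[OF assms(1)]
    period_sum_coeff_fun_mult[OF assms(2)] sum_coeff_fun_nat[OF assms(1)] sum_coeff_fun_nat[OF assms(2)]
  by simp

lemma pairing_add:
  "pairing n (\<lambda>k. U1 k + U2 k) (\<lambda>k. V1 k + V2 k) A B = pairing n U1 V1 A B + pairing n U2 V2 A B"
  unfolding pairing_def period_sum_add[symmetric]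
  by (rule arg_cong[where f = "period_sum n"]) (simp only: bit_cancel distrib_left distrib_right)

text \<open>Moving the shifts from \<open>C\<close> onto \<open>(A, B)\<close> turns the pairing into the period sum of
  \<open>C\<close> times the cocycle equation.\<close>

lemma pairing_boundary_cocycle:
  assumes n: "n > 0" and C: "periodic n C" and A: "periodic n A" and B: "periodic n B"
    and AB: "cocycle s A B"
  shows "pairing n (\<lambda>k. C k + C (k - 1)) (\<lambda>k. C k + C (k - s)) A B = 0"
proof -
  have sh1: "period_sum n (\<lambda>k. C (k - 1) * A k) = period_sum n (\<lambda>k. C k * A (k + 1))"
    using period_sum_shift[OF n periodic_mult[OF periodic_shift_diff[OF C, of 1] A], of 1] by simp
  have sh2: "period_sum n (\<lambda>k. C (k - s) * B k) = period_sum n (\<lambda>k. C k * B (k + s))"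
    using period_sum_shift[OF n periodic_mult[OF periodic_shift_diff[OF C, of s] B], of s] by simp
  have "pairing n (\<lambda>k. C k + C (k - 1)) (\<lambda>k. C k + C (k - s)) A B =
      period_sum n (\<lambda>k. C k * A k) + period_sum n (\<lambda>k. C (k - 1) * A k) +
      (period_sum n (\<lambda>k. C k * B k) + period_sum n (\<lambda>k. C (k - s) * B k))"
    unfolding pairing_def by (simp only: period_sum_add[symmetric] distrib_right)
  also have "\<dots> = period_sum n (\<lambda>k. C k * (A k + A (k + 1) + B k + B (k + s)))"
    unfolding sh1 sh2 by (simp only: period_sum_add[symmetric] distrib_left add.assoc)
  also have "\<dots> = 0"
    using AB by (simp add: cocycle_def period_sum_def)
  finally show ?thesis .
qed

lemma cocycle_shift:
  assumes "cocycle s A B"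
  shows "cocycle s (\<lambda>k. A (k - t)) (\<lambda>k. B (k - t))"
  unfolding cocycle_def
proof
  fix k
  show "A (k - t) + A (k + 1 - t) + B (k - t) + B (k + s - t) = 0"
    using assms[unfolded cocycle_def, rule_format, of "k - t"] by (simp add: algebra_simps)
qed

text \<open>Shifting \<open>(A, B)\<close> by one changes the pairing by that of \<open>((1 + x\<^sup>-\<^sup>1) U, (1 + x\<^sup>-\<^sup>1) V)\<close>,
  which by the cycle equation is the boundary of \<open>x\<^sup>-\<^sup>1 U\<close>.\<close>

lemma pairing_cocycle_shift_one:
  assumes n: "n > 0" and U: "periodic n U" and V: "periodic n V" and A: "periodic n A"
    and B: "periodic n B" and AB: "cocycle s A B" and UV: "cycle s U V"
  shows "pairing n U V (\<lambda>k. A (k - 1)) (\<lambda>k. B (k - 1)) = pairing n U V A B"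
proof -
  have g: "periodic n (\<lambda>k. U k * A (k - 1) + V k * B (k - 1))"
    by (intro periodic_add periodic_mult U V periodic_shift_diff A B)
  have V_step: "V (k + 1) + V k = U (k + 1) + U (k - s + 1)" for k
  proof -
    have "U (k + 1) + U (k + 1 - s) + V (k + 1) + V (k + 1 - 1) = 0"
      using UV by (simp only: cycle_def)
    moreover have "k + 1 - s = k - s + 1" "k + 1 - 1 = k"
      by simp_all
    ultimately have "U (k + 1) + U (k - s + 1) + (V (k + 1) + V k) = 0"
      by (simp only: add.assoc)
    then show ?thesis
      unfolding bit_add_eq_0_iff by (rule sym)
  qed
  have "pairing n U V (\<lambda>k. A (k - 1)) (\<lambda>k. B (k - 1)) =
      period_sum n (\<lambda>k. U (k + 1) * A k + V (k + 1) * B k)"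
    unfolding pairing_def using period_sum_shift[OF n g, of 1] by simp
  also have "\<dots> = pairing n (\<lambda>k. U (k + 1) + U k) (\<lambda>k. V (k + 1) + V k) A B + pairing n U V A B"
    unfolding pairing_def period_sum_add[symmetric]
    by (rule arg_cong[where f = "period_sum n"]) (simp only: bit_cancel distrib_left distrib_right)
  also have "pairing n (\<lambda>k. U (k + 1) + U k) (\<lambda>k. V (k + 1) + V k) A B =
      pairing n (\<lambda>k. U (k + 1) + U (k - 1 + 1)) (\<lambda>k. U (k + 1) + U (k - s + 1)) A B"
    unfolding V_step by simp
  also have "\<dots> = 0"
    using pairing_boundary_cocycle[OF n periodic_shift[OF U, of 1] A B AB] by simp
  finally show ?thesis by simp
qed

lemma pairing_cocycle_shift:
  assumes n: "n > 0" and U: "periodic n U" and V: "periodic n V" and A: "periodic n A"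
    and B: "periodic n B" and AB: "cocycle s A B" and UV: "cycle s U V"
  shows "pairing n U V (\<lambda>k. A (k - int t)) (\<lambda>k. B (k - int t)) = pairing n U V A B"
proof (induction t)
  case (Suc t)
  have "pairing n U V (\<lambda>k. A (k - 1 - int t)) (\<lambda>k. B (k - 1 - int t)) =
      pairing n U V (\<lambda>k. A (k - int t)) (\<lambda>k. B (k - int t))"
    using pairing_cocycle_shift_one[OF n U V periodic_shift_diff[OF A] periodic_shift_diff[OF B]
        cocycle_shift[OF AB] UV] by simp
  then show ?case
    using Suc by (simp add: algebra_simps)
qed simp

section \<open>Cycles modulo boundaries\<close>

definition delta :: "nat \<Rightarrow> int \<Rightarrow> int \<Rightarrow> bit" where
  "delta n c k = of_bool (k mod int n = c)"

definition window :: "nat \<Rightarrow> int \<Rightarrow> int \<Rightarrow> bit" where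
  "window n s k = of_bool (k mod int n < s)"

lemma diff_one_mod:
  assumes "n > 0"
  shows "(k - 1) mod int n = (if k mod int n = 0 then int n - 1 else k mod int n - 1)"
proof -
  have "(k - 1) mod int n = (k mod int n - 1) mod int n"
    by (simp add: mod_diff_left_eq)
  moreover have "0 \<le> k mod int n" "k mod int n < int n"
    using assms by simp_all
  ultimately show ?thesis
    by (cases "k mod int n = 0") (auto simp: mod_pos_pos_trivial zmod_minus1)
qed

lemma diff_mod_eq_0_iff:
  assumes "0 < s" "s < int n"
  shows "(k - s) mod int n = 0 \<longleftrightarrow> k mod int n = s"
proof -
  have "(k - s) mod int n = 0 \<longleftrightarrow> k mod int n = s mod int n"
    by (simp add: dvd_eq_mod_eq_0[symmetric] mod_eq_dvd_iff)
  then show ?thesis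
    using assms by simp
qed

lemma window_step:
  assumes n: "n > 0" and s: "0 < s" "s < int n"
  shows "window n s k + window n s (k - 1) = delta n 0 k + delta n 0 (k - s)"
  using diff_one_mod[OF n, of k] diff_mod_eq_0_iff[OF s, of k] s
  by (auto simp: window_def delta_def)

lemma delta_shift:
  assumes "x < n"
  shows "delta n (int x) (k - int c) = delta n (int ((x + c) mod n)) k"
proof -
  have "(k - int c) mod int n = int x \<longleftrightarrow> k mod int n = (int x + int c) mod int n"
  proof
    assume "(k - int c) mod int n = int x"
    then show "k mod int n = (int x + int c) mod int n"
      by (metis mod_add_left_eq diff_add_cancel)
  next
    assume "k mod int n = (int x + int c) mod int n"
    then have "(k - int c) mod int n = (int x + int c - int c) mod int n"
      by (metis mod_diff_left_eq)
    then show "(k - int c) mod int n = int x"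
      using assms by simp
  qed
  then show ?thesis
    by (simp add: delta_def zmod_int)
qed

definition partial_sum :: "nat \<Rightarrow> (int \<Rightarrow> bit) \<Rightarrow> int \<Rightarrow> bit" where
  "partial_sum n U k = (\<Sum>i\<in>{1..k mod int n}. U i)"

lemma periodic_partial_sum: "periodic n (partial_sum n U)"
  by (simp add: periodic_def partial_sum_def)

lemma partial_sum_step:
  assumes n: "n > 0" and U: "periodic n U"
  shows "partial_sum n U k + partial_sum n U (k - 1) = U k + period_sum n U * delta n 0 k"
proof (cases "k mod int n = 0")
  case True
  have "{0..<int n} = insert 0 {1..int n - 1}"
    using n by auto
  then have "period_sum n U = U 0 + (\<Sum>i\<in>{1..int n - 1}. U i)"
    by (simp add: period_sum_def)
  moreover have "partial_sum n U (k - 1) = (\<Sum>i\<in>{1..int n - 1}. U i)"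
    using True diff_one_mod[OF n, of k] by (simp add: partial_sum_def)
  moreover have "U k = U 0"
    using U True by (metis periodic_def)
  moreover have "partial_sum n U k = 0" "delta n 0 k = 1"
    using True by (simp_all add: partial_sum_def delta_def)
  ultimately show ?thesis
    by (simp only: bit_cancel mult_1_left)
next
  case False
  then have r: "0 < k mod int n"
    using n by (metis pos_mod_sign of_nat_0_less_iff order_le_less)
  then have "{1..k mod int n} = insert (k mod int n) {1..k mod int n - 1}"
    by auto
  then have "partial_sum n U k = U (k mod int n) + (\<Sum>i\<in>{1..k mod int n - 1}. U i)"
    by (simp add: partial_sum_def)
  moreover have "partial_sum n U (k - 1) = (\<Sum>i\<in>{1..k mod int n - 1}. U i)"
    using False diff_one_mod[OF n, of k] by (simp add: partial_sum_def)
  moreover have "U (k mod int n) = U k"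
    using U by (simp add: periodic_def)
  moreover have "delta n 0 k = 0"
    using False by (simp add: delta_def)
  ultimately show ?thesis
    by (simp only: bit_cancel mult_zero_left)
qed

lemma periodic_constant_if_step:
  fixes W :: "int \<Rightarrow> bit"
  assumes n: "n > 0" and W: "periodic n W" and step: "\<And>k. W k + W (k - 1) = 0"
  shows "W k = W 0"
proof -
  have "W (int j) = W 0" for j
  proof (induction j)
    case (Suc j)
    have "W (int (Suc j)) + W (int j) = 0"
      using step[of "int (Suc j)"] by simp
    then have "W (int (Suc j)) = W (int j)"
      by (simp only: bit_add_eq_0_iff)
    with Suc show ?case
      by simp
  qed simp
  then have "W (int (nat (k mod int n))) = W 0"
    by blast
  then show ?thesis
    using W n by (simp add: periodic_def)
qed

lemma cycle_remainder_step:
  assumes n: "n > 0" and s: "0 < s" "s < int n" and UV: "cycle s U V"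
    and C_step: "\<And>k. C k + C (k - 1) = U k + p * delta n 0 k"
  shows "V k + C k + C (k - s) + p * window n s k +
    (V (k - 1) + C (k - 1) + C (k - 1 - s) + p * window n s (k - 1)) = 0"
proof -
  have C_step_s: "C (k - s) + C (k - s - 1) = U (k - s) + p * delta n 0 (k - s)"
    using C_step[of "k - s"] by simp
  have "C (k - 1 - s) = C (k - s - 1)"
    by (simp add: algebra_simps)
  then have "V k + C k + C (k - s) + p * window n s k +
      (V (k - 1) + C (k - 1) + C (k - 1 - s) + p * window n s (k - 1)) =
      (V k + V (k - 1)) + (C k + C (k - 1)) + (C (k - s) + C (k - s - 1)) +
      p * (window n s k + window n s (k - 1))"
    by (simp only: bit_cancel distrib_left)
  also have "\<dots> = U k + U (k - s) + V k + V (k - 1)"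
    unfolding C_step C_step_s window_step[OF n s] by (simp only: bit_cancel distrib_left)
  also have "\<dots> = 0"
    using UV by (simp add: cycle_def)
  finally show ?thesis .
qed

text \<open>The boundary part is the partial sum of \<open>U\<close>; what is left of \<open>V\<close> is then
  invariant under the shift, hence constant.\<close>

lemma cycle_decomposition:
  assumes n: "n > 0" and s: "0 < s" "s < int n" and U: "periodic n U" and V: "periodic n V"
    and UV: "cycle s U V"
  obtains C p w where "periodic n C" "\<And>k. U k = C k + C (k - 1) + p * delta n 0 k"
    "\<And>k. V k = C k + C (k - s) + w + p * window n s k"
proof -
  define C where "C = partial_sum n U"
  define p where "p = period_sum n U"
  define W where "W k = V k + C k + C (k - s) + p * window n s k" for k
  have C_step: "C k + C (k - 1) = U k + p * delta n 0 k" for k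
    unfolding C_def p_def by (rule partial_sum_step[OF n U])
  have C: "periodic n C"
    unfolding C_def by (rule periodic_partial_sum)
  have "periodic n (window n s)"
    by (simp add: periodic_def window_def)
  then have "periodic n W"
    using periodic_add[OF periodic_add[OF periodic_add[OF V C] periodic_shift_diff[OF C]]
        periodic_mult[OF periodic_const]]
    by (simp add: W_def[abs_def])
  moreover have "W k + W (k - 1) = 0" for k
    unfolding W_def by (rule cycle_remainder_step[OF n s UV C_step])
  ultimately have W_const: "W k = W 0" for k
    using periodic_constant_if_step[OF n] by blast
  show thesis
  proof
    show "periodic n C" by (rule C)
    show "U k = C k + C (k - 1) + p * delta n 0 k" for k
      using bit_add_eq_0_iff[THEN iffD2, OF C_step[of k]]
      by (subst bit_add_eq_0_iff[symmetric]) (simp only: ac_simps)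
    show "V k = C k + C (k - s) + W 0 + p * window n s k" for k
      using bit_add_eq_0_iff[THEN iffD2, OF W_const[of k]] unfolding W_def
      by (subst bit_add_eq_0_iff[symmetric]) (simp only: ac_simps)
  qed
qed

lemma period_sum_delta_mult:
  assumes "n > 0"
  shows "period_sum n (\<lambda>k. delta n 0 k * A k) = A 0"
proof -
  have "period_sum n (\<lambda>k. delta n 0 k * A k) = (\<Sum>k\<in>{0..<int n}. if k = 0 then A k else 0)"
    unfolding period_sum_def by (rule sum.cong) (auto simp: delta_def)
  also have "\<dots> = A 0"
    using assms by (simp add: sum.delta)
  finally show ?thesis .
qed

lemma period_sum_window_mult:
  assumes "0 \<le> s" "s \<le> int n"
  shows "period_sum n (\<lambda>k. window n s k * B k) = (\<Sum>k\<in>{0..<s}. B k)"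
proof -
  have "period_sum n (\<lambda>k. window n s k * B k) = (\<Sum>k\<in>{0..<int n}. if k < s then B k else 0)"
    unfolding period_sum_def by (rule sum.cong) (auto simp: window_def)
  also have "\<dots> = (\<Sum>k\<in>{k\<in>{0..<int n}. k < s}. B k)"
    by (rule sum.inter_filter[symmetric]) simp
  also have "{k\<in>{0..<int n}. k < s} = {0..<s}"
    using assms by auto
  finally show ?thesis .
qed

lemma pairing_cycle_decomposition:
  assumes n: "n > 0" and s: "0 < s" "s < int n" and A: "periodic n A" and B: "periodic n B"
    and AB: "cocycle s A B" and C: "periodic n C"
    and U: "\<And>k. U k = C k + C (k - 1) + p * delta n 0 k"
    and V: "\<And>k. V k = C k + C (k - s) + w + p * window n s k"
  shows "pairing n U V A B = p * (A 0 + (\<Sum>k\<in>{0..<s}. B k)) + w * period_sum n B"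
proof -
  have "pairing n U V A B = pairing n (\<lambda>k. C k + C (k - 1)) (\<lambda>k. C k + C (k - s)) A B +
      pairing n (\<lambda>k. p * delta n 0 k) (\<lambda>k. w + p * window n s k) A B"
    unfolding U V pairing_add[symmetric] by (simp only: add.assoc)
  also have "pairing n (\<lambda>k. C k + C (k - 1)) (\<lambda>k. C k + C (k - s)) A B = 0"
    by (rule pairing_boundary_cocycle[OF n C A B AB])
  also have "pairing n (\<lambda>k. p * delta n 0 k) (\<lambda>k. w + p * window n s k) A B =
      p * period_sum n (\<lambda>k. delta n 0 k * A k) + w * period_sum n B +
      p * period_sum n (\<lambda>k. window n s k * B k)"
    unfolding pairing_def period_sum_cmult[symmetric] period_sum_add[symmetric]
    by (rule arg_cong[where f = "period_sum n"]) (simp only: distrib_left distrib_right ac_simps)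
  also have "period_sum n (\<lambda>k. window n s k * B k) = (\<Sum>k\<in>{0..<s}. B k)"
    using s by (intro period_sum_window_mult) auto
  also have "p * period_sum n (\<lambda>k. delta n 0 k * A k) + w * period_sum n B + p * (\<Sum>k\<in>{0..<s}. B k) =
      p * (A 0 + (\<Sum>k\<in>{0..<s}. B k)) + w * period_sum n B"
    unfolding period_sum_delta_mult[OF n] by (simp only: distrib_left ac_simps)
  finally show ?thesis
    by simp
qed

section \<open>Counting the shifts of a cocycle\<close>

lemma card_shifted_support:
  assumes n: "n > 0" and F: "periodic n F"
  shows "card {t. t < n \<and> F (k - int t) = 1} = card {r. r < n \<and> F (int r) = 1}"
proof -
  let ?f = "\<lambda>t. nat ((k - int t) mod int n)"
  have f_less: "?f t < n" for t
    using n by (simp add: nat_less_iff)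
  have F_f: "F (int (?f t)) = F (k - int t)" for t
    using F n by (simp add: periodic_def)
  have f_f: "?f (?f t) = t" if "t < n" for t
  proof -
    have "(k - int (?f t)) mod int n = (k - (k - int t)) mod int n"
      using n by (simp add: mod_diff_right_eq)
    then show ?thesis
      using that by simp
  qed
  have "bij_betw ?f {t. t < n \<and> F (k - int t) = 1} {r. r < n \<and> F (int r) = 1}"
  proof (rule bij_betw_byWitness[where f' = ?f])
    show "?f ` {t. t < n \<and> F (k - int t) = 1} \<subseteq> {r. r < n \<and> F (int r) = 1}"
      using f_less F_f by auto
    show "?f ` {r. r < n \<and> F (int r) = 1} \<subseteq> {t. t < n \<and> F (k - int t) = 1}"
    proof (intro subsetI, elim imageE, clarify)
      fix r assume "r < n" "F (int r) = 1"
      moreover have "F (k - int (?f r)) = F (int r)"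
        using \<open>r < n\<close> by (metis F_f f_f)
      ultimately show "?f r < n \<and> F (k - int (?f r)) = 1"
        using f_less by simp
    qed
  qed (blast intro: f_f)+
  then show ?thesis
    by (rule bij_betw_same_card)
qed

lemma card_UN_shifted_supports_le:
  assumes n: "n > 0" and F: "periodic n F" and q: "finite q"
  shows "card (\<Union>k\<in>q. {t. t < n \<and> F (int k - int t) = 1}) \<le> card q * card {r. r < n \<and> F (int r) = 1}"
proof -
  have "card (\<Union>k\<in>q. {t. t < n \<and> F (int k - int t) = 1}) \<le>
      (\<Sum>k\<in>q. card {t. t < n \<and> F (int k - int t) = 1})"
    by (rule card_UN_le[OF q])
  also have "\<dots> = card q * card {r. r < n \<and> F (int r) = 1}"
    by (simp add: card_shifted_support[OF n F])
  finally show ?thesis .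
qed

definition jump_count :: "nat \<Rightarrow> nat set \<Rightarrow> nat" where
  "jump_count n a = card {r. r < n \<and> coeff_fun n a (int r) + coeff_fun n a (int r + 1) = 1}"

lemma card_support_coeff_fun: "a \<subseteq> {0..<n} \<Longrightarrow> card {r. r < n \<and> coeff_fun n a (int r) = 1} = card a"
  by (rule arg_cong[where f = card]) (auto simp: coeff_fun_nat)

lemma pairing_shifted_eq_sums:
  assumes n: "1 < n" and A: "periodic n A" and u: "u \<subseteq> {0..<n}" and j: "j \<subseteq> {0..<n}"
    and v: "v \<subseteq> {0..<n}"
  shows "pairing n (coeff_fun n (radd u (rmul n j {0, 1}))) (coeff_fun n v)
      (\<lambda>k. A (k - int t)) (\<lambda>k. B (k - int t)) =
    (\<Sum>k\<in>u. A (int k - int t)) + (\<Sum>k\<in>j. A (int k - int t) + A (int k - int t + 1)) +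
      (\<Sum>k\<in>v. B (int k - int t))"
proof -
  let ?At = "\<lambda>k. A (k - int t)"
  have n0: "n > 0"
    using n by simp
  have "periodic n (\<lambda>k. coeff_fun n j (k - 1) * ?At k)"
    by (rule periodic_mult[OF periodic_shift_diff[OF periodic_coeff_fun] periodic_shift_diff[OF A]])
  from period_sum_shift[OF n0 this, of 1]
  have shift_j: "period_sum n (\<lambda>k. coeff_fun n j (k - 1) * ?At k) =
      period_sum n (\<lambda>k. coeff_fun n j k * ?At (k + 1))"
    by simp
  have "pairing n (coeff_fun n (radd u (rmul n j {0, 1}))) (coeff_fun n v) ?At (\<lambda>k. B (k - int t)) =
    period_sum n (\<lambda>k. coeff_fun n u k * ?At k) + period_sum n (\<lambda>k. coeff_fun n j k * ?At k) +
      period_sum n (\<lambda>k. coeff_fun n j (k - 1) * ?At k) +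
      period_sum n (\<lambda>k. coeff_fun n v k * B (k - int t))"
    unfolding coeff_fun_radd_rmul_binomial[OF j zero_less_one n, unfolded of_nat_1] pairing_def
      period_sum_add[symmetric]
    by (simp only: distrib_right add.assoc)
  also have "\<dots> = (\<Sum>k\<in>u. ?At (int k)) + (\<Sum>k\<in>j. ?At (int k)) + (\<Sum>k\<in>j. ?At (int k + 1)) +
      (\<Sum>k\<in>v. B (int k - int t))"
    by (simp only: shift_j period_sum_coeff_fun_mult[OF u] period_sum_coeff_fun_mult[OF j]
        period_sum_coeff_fun_mult[OF v])
  also have "(\<Sum>k\<in>j. ?At (int k + 1)) = (\<Sum>k\<in>j. A (int k - int t + 1))"
    by (simp add: algebra_simps)
  finally show ?thesis
    by (simp only: sum.distrib add.assoc)
qed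

definition odd_pairings :: "nat \<Rightarrow> nat set \<Rightarrow> nat set \<Rightarrow> nat set \<Rightarrow> nat set \<Rightarrow> bool" where
  "odd_pairings n u v a b \<longleftrightarrow> (\<forall>t. pairing n (coeff_fun n u) (coeff_fun n v)
     (\<lambda>k. coeff_fun n a (k - int t)) (\<lambda>k. coeff_fun n b (k - int t)) = 1)"

text \<open>Each of the \<open>n\<close> shifts of \<open>(a, b)\<close> pairs oddly with the cycle, so it must meet the support
  of \<open>u\<close>, of \<open>v\<close>, or of \<open>j (1 + x)\<close>; a point of \<open>u\<close> is met by \<open>|a|\<close> shifts, a point of \<open>v\<close> by
  \<open>|b|\<close> shifts and a point of \<open>j\<close> by \<open>jump_count n a\<close> shifts.\<close>

lemma card_bound_if_odd_pairings:
  assumes "1 < n" and a: "a \<subseteq> {0..<n}" and b: "b \<subseteq> {0..<n}"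
    and u: "u \<subseteq> {0..<n}" and v: "v \<subseteq> {0..<n}" and j: "j \<subseteq> {0..<n}"
    and "odd_pairings n (radd u (rmul n j {0, 1})) v a b"
  shows "n \<le> card a * card u + card b * card v + jump_count n a * card j"
proof -
  have n: "n > 0"
    using assms(1) by simp
  let ?A = "coeff_fun n a" and ?B = "coeff_fun n b"
  let ?H = "\<lambda>k. ?A k + ?A (k + 1)"
  have H: "periodic n ?H"
    by (intro periodic_add periodic_coeff_fun periodic_shift)
  have odd: "(\<Sum>k\<in>u. ?A (int k - int t)) + (\<Sum>k\<in>j. ?H (int k - int t)) + (\<Sum>k\<in>v. ?B (int k - int t)) = 1"
    for t
    using assms(7)
    unfolding odd_pairings_def pairing_shifted_eq_sums[OF assms(1) periodic_coeff_fun u j v] by blast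
  define hits where "hits F q = (\<Union>k\<in>q. {t. t < n \<and> F (int k - int t) = 1})"
    for F :: "int \<Rightarrow> bit" and q :: "nat set"
  have "{0..<n} \<subseteq> hits ?A u \<union> hits ?H j \<union> hits ?B v"
  proof
    fix t assume "t \<in> {0..<n}"
    then have t: "t < n"
      by simp
    have hit: "t \<in> hits F q" if "(\<Sum>k\<in>q. F (int k - int t)) = 1" for F q
      using sum_bit_eq_one_imp_ex[OF that] t unfolding hits_def by blast
    then show "t \<in> hits ?A u \<union> hits ?H j \<union> hits ?B v"
      using bit_add3_eq_one[OF odd[of t]] hit[of ?A u] hit[of ?H j] hit[of ?B v] by blast
  qed
  moreover have "finite (hits F q)" for F q
    unfolding hits_def by (rule finite_subset[of _ "{0..<n}"]) auto
  ultimately have "n \<le> card (hits ?A u \<union> hits ?H j \<union> hits ?B v)"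
    using card_mono[of "hits ?A u \<union> hits ?H j \<union> hits ?B v" "{0..<n}"] by simp
  also have "\<dots> \<le> card (hits ?A u) + card (hits ?H j) + card (hits ?B v)"
    by (meson card_Un_le add_le_mono le_trans order_refl)
  also have "\<dots> \<le> card u * card a + card j * jump_count n a + card v * card b"
    unfolding hits_def jump_count_def
    using card_UN_shifted_supports_le[OF n periodic_coeff_fun, of u a] card_support_coeff_fun[OF a]
      card_UN_shifted_supports_le[OF n H, of j]
      card_UN_shifted_supports_le[OF n periodic_coeff_fun, of v b] card_support_coeff_fun[OF b]
      finite_subset[OF u] finite_subset[OF j] finite_subset[OF v]
    by (intro add_mono) auto
  finally show ?thesis
    by (simp add: mult.commute)
qed

lemma pairing_shifted_cocycle_decomposed_cycle:
  assumes n: "n > 0" and s: "0 < s" "s < n" and U: "periodic n U" and V: "periodic n V"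
    and UV: "cycle (int s) U V" and C: "periodic n C"
    and UC: "\<And>k. U k = C k + C (k - 1) + p * delta n 0 k"
    and VC: "\<And>k. V k = C k + C (k - int s) + w + p * window n (int s) k"
    and ab: "cocycle (int s) (coeff_fun n a) (coeff_fun n b)" and a0: "0 \<notin> a" and b: "b \<subseteq> {0..<n}"
  shows "pairing n U V (\<lambda>k. coeff_fun n a (k - int t)) (\<lambda>k. coeff_fun n b (k - int t)) =
    p * of_nat (card (b \<inter> {0..<s})) + w * of_nat (card b)"
proof -
  have "pairing n U V (\<lambda>k. coeff_fun n a (k - int t)) (\<lambda>k. coeff_fun n b (k - int t)) =
      pairing n U V (coeff_fun n a) (coeff_fun n b)"
    by (rule pairing_cocycle_shift[OF n U V periodic_coeff_fun periodic_coeff_fun ab UV])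
  also have "\<dots> = p * (coeff_fun n a 0 + (\<Sum>k\<in>{0..<int s}. coeff_fun n b k)) +
      w * period_sum n (coeff_fun n b)"
    using s
    by (intro pairing_cycle_decomposition[OF n _ _ periodic_coeff_fun periodic_coeff_fun ab C UC VC]) auto
  also have "coeff_fun n a 0 = 0"
    using a0 n by (simp add: coeff_fun_def)
  also have "(\<Sum>k\<in>{0..<int s}. coeff_fun n b k) = of_nat (card (b \<inter> {0..<s}))"
    by (rule sum_coeff_fun_initial_segment) (use s in simp)
  finally show ?thesis
    unfolding period_sum_coeff_fun[OF b] by (simp only: add_0_left)
qed

text \<open>Here \<open>p\<close> and \<open>w\<close> are the coordinates of the class of \<open>(u, v)\<close> given by
  \<open>cycle_decomposition\<close>.\<close>

lemma nontrivial_cycle_pairings: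
  assumes d: "d + 1 < n" and uv: "(u, v) \<in> C1 n d - C2 n d"
  obtains p w :: bit where "p \<noteq> 0 \<or> w \<noteq> 0" and "\<And>a b.
    cocycle (int (d + 1)) (coeff_fun n a) (coeff_fun n b) \<Longrightarrow> 0 \<notin> a \<Longrightarrow> b \<subseteq> {0..<n} \<Longrightarrow>
    odd_pairings n u v a b \<longleftrightarrow> p * of_nat (card (b \<inter> {0..<d + 1})) + w * of_nat (card b) = 1"
proof -
  have n: "n > 0" and s: "0 < d + 1" "d + 1 < n"
    using d by simp_all
  have sub: "u \<subseteq> {0..<n}" "v \<subseteq> {0..<n}" and cyc: "cycle (int (d + 1)) (coeff_fun n u) (coeff_fun n v)"
    using uv C1_iff_cycle[OF d] by auto
  obtain C p w where C: "periodic n C" and UC: "\<And>k. coeff_fun n u k = C k + C (k - 1) + p * delta n 0 k"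
    and VC: "\<And>k. coeff_fun n v k = C k + C (k - int (d + 1)) + w + p * window n (int (d + 1)) k"
    using cycle_decomposition[OF n _ _ periodic_coeff_fun periodic_coeff_fun cyc] d by auto
  have "p \<noteq> 0 \<or> w \<noteq> 0"
  proof (rule ccontr)
    assume "\<not> (p \<noteq> 0 \<or> w \<noteq> 0)"
    then have "coeff_fun n u = (\<lambda>k. C k + C (k - 1))" "coeff_fun n v = (\<lambda>k. C k + C (k - int (d + 1)))"
      using UC VC by (simp_all add: fun_eq_iff)
    then have "(u, v) \<in> C2 n d"
      using C2_iff_boundary[OF d sub] C by blast
    then show False
      using uv by blast
  qed
  moreover have "odd_pairings n u v a b \<longleftrightarrow>
      p * of_nat (card (b \<inter> {0..<d + 1})) + w * of_nat (card b) = 1"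
    if "cocycle (int (d + 1)) (coeff_fun n a) (coeff_fun n b)" "0 \<notin> a" "b \<subseteq> {0..<n}" for a b
    unfolding odd_pairings_def
    using pairing_shifted_cocycle_decomposed_cycle[OF n s periodic_coeff_fun periodic_coeff_fun cyc C UC VC
        that]
    by simp
  ultimately show thesis
    by (rule that)
qed

section \<open>Intervals and arithmetic progressions\<close>

lemma coeff_fun_atLeastAtMost:
  "n > 0 \<Longrightarrow> coeff_fun n {lo..hi} k = of_bool (int lo \<le> k mod int n \<and> k mod int n \<le> int hi)"
  unfolding coeff_fun_def by (simp add: nat_le_iff le_nat_iff)

lemma add_one_mod:
  assumes "n > 0"
  shows "(k + 1) mod int n = (if k mod int n = int n - 1 then 0 else k mod int n + 1)"
proof -
  have "(k + 1) mod int n = (k mod int n + 1) mod int n"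
    by (simp add: mod_add_left_eq)
  moreover have "0 \<le> k mod int n" "k mod int n < int n"
    using assms by simp_all
  ultimately show ?thesis
    by (cases "k mod int n = int n - 1") (auto simp: mod_pos_pos_trivial)
qed

lemma coeff_fun_atLeastAtMost_step:
  assumes "1 \<le> lo" "lo \<le> hi" "hi < n"
  shows "coeff_fun n {lo..hi} k + coeff_fun n {lo..hi} (k + 1) =
    delta n (int lo - 1) k + delta n (int hi) k"
proof -
  have n: "n > 0"
    using assms by simp
  have "0 \<le> k mod int n" "k mod int n < int n"
    using n by simp_all
  then show ?thesis
    unfolding coeff_fun_atLeastAtMost[OF n] add_one_mod[OF n] delta_def of_bool_neq_bit[symmetric]
    using assms by (auto simp: of_bool_eq_iff)
qed

lemma jump_count_atLeastAtMost:
  assumes "1 \<le> lo" "lo \<le> hi" "hi < n"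
  shows "jump_count n {lo..hi} = 2"
proof -
  have "{r. r < n \<and> coeff_fun n {lo..hi} (int r) + coeff_fun n {lo..hi} (int r + 1) = 1} = {lo - 1, hi}"
    unfolding coeff_fun_atLeastAtMost_step[OF assms] delta_def of_bool_neq_bit[symmetric]
    using assms by auto
  then show ?thesis
    unfolding jump_count_def using assms by simp
qed

definition arith_prog :: "nat \<Rightarrow> nat \<Rightarrow> nat \<Rightarrow> nat \<Rightarrow> nat \<Rightarrow> nat set" where
  "arith_prog n s c lo hi = (\<lambda>i. (c + i * s) mod n) ` {lo..hi}"

lemma arith_prog_subset: "n > 0 \<Longrightarrow> arith_prog n s c lo hi \<subseteq> {0..<n}"
  by (auto simp: arith_prog_def)

lemma arith_prog_term_inject:
  fixes s n c i i' :: nat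
  assumes "coprime s n" "i < n" "i' < n" "(c + i * s) mod n = (c + i' * s) mod n"
  shows "i = i'"
proof -
  have "[c + i * s = c + i' * s] (mod n)"
    using assms(4) by (simp add: cong_def)
  then have "[i = i'] (mod n)"
    using assms(1) by (simp add: cong_add_lcancel_nat cong_mult_rcancel_nat)
  then show ?thesis
    using assms(2,3) by (rule cong_less_modulus_unique_nat)
qed

lemma card_arith_prog:
  assumes "coprime s n" "hi < n"
  shows "card (arith_prog n s c lo hi) = Suc hi - lo"
proof -
  have "inj_on (\<lambda>i. (c + i * s) mod n) {lo..hi}"
    using assms by (intro inj_onI) (auto intro: arith_prog_term_inject)
  then show ?thesis
    unfolding arith_prog_def by (simp add: card_image)
qed

lemma arith_prog_term_notin:
  assumes "coprime s n" "i < n" "hi < n" "i < lo \<or> hi < i"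
  shows "(c + i * s) mod n \<notin> arith_prog n s c lo hi"
proof
  assume "(c + i * s) mod n \<in> arith_prog n s c lo hi"
  then obtain i' where "i' \<in> {lo..hi}" "(c + i * s) mod n = (c + i' * s) mod n"
    unfolding arith_prog_def by auto
  then show False
    using assms arith_prog_term_inject[OF assms(1), of i i' c] by auto
qed

lemma add_mod_mem_arith_prog_iff:
  assumes "1 \<le> lo" "lo \<le> hi" "r < n"
  shows "(r + s) mod n \<in> arith_prog n s c lo hi \<longleftrightarrow> r \<in> arith_prog n s c (lo - 1) (hi - 1)"
proof -
  have step: "(r + s) mod n = (c + i * s) mod n \<longleftrightarrow> r = (c + (i - 1) * s) mod n" if i: "1 \<le> i" for i
  proof -
    obtain i' where "i = Suc i'"
      using i by (cases i) auto
    then show ?thesis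
      using assms(3) cong_add_rcancel_nat[of r s "c + i' * s" n] by (simp add: cong_def ac_simps)
  qed
  have "(r + s) mod n \<in> arith_prog n s c lo hi \<longleftrightarrow> (\<exists>i\<in>{lo..hi}. (r + s) mod n = (c + i * s) mod n)"
    unfolding arith_prog_def by blast
  also have "\<dots> \<longleftrightarrow> (\<exists>i\<in>{lo..hi}. r = (c + (i - 1) * s) mod n)"
    by (rule bex_cong[OF refl], rule step) (use assms(1) in auto)
  also have "\<dots> \<longleftrightarrow> (\<exists>i\<in>{lo - 1..hi - 1}. r = (c + i * s) mod n)"
  proof
    assume "\<exists>i\<in>{lo - 1..hi - 1}. r = (c + i * s) mod n"
    then obtain i where "i \<in> {lo - 1..hi - 1}" "r = (c + i * s) mod n"
      by blast
    then show "\<exists>i\<in>{lo..hi}. r = (c + (i - 1) * s) mod n"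
      using assms(1,2) by (intro bexI[of _ "i + 1"]) auto
  qed force
  also have "\<dots> \<longleftrightarrow> r \<in> arith_prog n s c (lo - 1) (hi - 1)"
    unfolding arith_prog_def by blast
  finally show ?thesis .
qed

lemma of_bool_mem_insert_add:
  assumes "a \<notin> M" "b \<notin> M"
  shows "(of_bool (x \<in> insert a M) + of_bool (x \<in> insert b M) :: bit) =
    of_bool (x = a) + of_bool (x = b)"
  using assms by (cases "x \<in> M") auto

lemma coeff_fun_arith_prog_step:
  assumes cop: "coprime s n" and lo: "1 \<le> lo" "lo \<le> hi" and hi: "hi < n"
  shows "coeff_fun n (arith_prog n s c lo hi) k + coeff_fun n (arith_prog n s c lo hi) (k + int s) =
    delta n (int ((c + (lo - 1) * s) mod n)) k + delta n (int ((c + hi * s) mod n)) k"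
proof -
  have n: "n > 0"
    using hi by simp
  define r where "r = nat (k mod int n)"
  have r: "r < n" "int r = k mod int n"
    using n by (auto simp: r_def nat_less_iff)
  have r_shift: "nat ((k + int s) mod int n) = (r + s) mod n"
  proof -
    have "(k + int s) mod int n = (int r + int s) mod int n"
      using r by (simp add: mod_add_left_eq)
    then show ?thesis
      by (metis nat_int of_nat_add zmod_int)
  qed
  define M where "M = arith_prog n s c lo (hi - 1)"
  have notin_M: "(c + (lo - 1) * s) mod n \<notin> M" "(c + hi * s) mod n \<notin> M"
    unfolding M_def by (rule arith_prog_term_notin[OF cop]; use lo hi in simp)+
  have "{lo..hi} = insert hi {lo..hi - 1}" "{lo - 1..hi - 1} = insert (lo - 1) {lo..hi - 1}"
    using lo by auto
  then have P: "arith_prog n s c lo hi = insert ((c + hi * s) mod n) M"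
    and P': "arith_prog n s c (lo - 1) (hi - 1) = insert ((c + (lo - 1) * s) mod n) M"
    unfolding M_def arith_prog_def by simp_all
  have "coeff_fun n (arith_prog n s c lo hi) k = of_bool (r \<in> insert ((c + hi * s) mod n) M)"
    unfolding coeff_fun_def r_def[symmetric] P ..
  moreover have "coeff_fun n (arith_prog n s c lo hi) (k + int s) =
      of_bool (r \<in> insert ((c + (lo - 1) * s) mod n) M)"
    unfolding coeff_fun_def r_shift add_mod_mem_arith_prog_iff[OF lo r(1)] P' ..
  moreover have "delta n (int t) k = of_bool (r = t)" for t
    unfolding delta_def r(2)[symmetric] by simp
  ultimately show ?thesis
    using of_bool_mem_insert_add[OF notin_M(2,1)] by (simp add: add.commute)
qed

section \<open>The reflection \<open>x \<mapsto> x\<^sup>-\<^sup>1\<close>\<close>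

definition reflect :: "nat \<Rightarrow> nat set \<Rightarrow> nat set" where
  "reflect n p = (\<lambda>k. (n - k) mod n) ` p"

lemma minus_mod_minus_mod: "x < n \<Longrightarrow> (n - (n - x) mod n) mod n = x" for x n :: nat
  by (cases "x = 0") simp_all

lemma reflect_subset: "n > 0 \<Longrightarrow> reflect n p \<subseteq> {0..<n}"
  by (auto simp: reflect_def)

lemma card_reflect:
  assumes "p \<subseteq> {0..<n}"
  shows "card (reflect n p) = card p"
  unfolding reflect_def
  by (rule card_image, rule inj_on_inverseI[where g = "\<lambda>k. (n - k) mod n"])
    (use assms minus_mod_minus_mod in auto)

lemma coeff_fun_reflect:
  assumes p: "p \<subseteq> {0..<n}" and n: "n > 0"
  shows "coeff_fun n (reflect n p) k = coeff_fun n p (- k)"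
proof -
  define r where "r = nat (k mod int n)"
  have r: "r < n" "int r = k mod int n"
    using n by (auto simp: r_def nat_less_iff)
  have minus_k: "nat ((- k) mod int n) = (n - r) mod n"
  proof -
    have "(- k) mod int n = (int n - int r) mod int n"
      using r by (simp add: mod_minus_eq mod_diff_left_eq[symmetric])
    also have "\<dots> = int ((n - r) mod n)"
      using r by (simp add: of_nat_diff zmod_int)
    finally show ?thesis
      by simp
  qed
  have "r \<in> reflect n p \<longleftrightarrow> (n - r) mod n \<in> p"
    unfolding reflect_def using p r(1) minus_mod_minus_mod
    by (auto intro!: image_eqI[where x = "(n - r) mod n"])
  then show ?thesis
    unfolding coeff_fun_def r_def[symmetric] minus_k by simp
qed

text \<open>Under \<open>x \<mapsto> x\<^sup>-\<^sup>1\<close>, written \<open>p \<mapsto> p'\<close>, and the swap of the two halves, a cocycle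
  \<open>(u + j (1 + x\<^sup>-\<^sup>s), v)\<close> becomes the cycle \<open>(v', u' + j' (1 + x\<^sup>s))\<close>, which differs from
  \<open>(v' + j' (1 + x), u')\<close> by the boundary of \<open>j'\<close>.\<close>

lemma cycle_reflect_cocycle:
  assumes "cocycle s (\<lambda>k. U k + J k + J (k + s)) V"
  shows "cycle s (\<lambda>k. V (- k) + J (- k) + J (1 - k)) (\<lambda>k. U (- k))"
  unfolding cycle_def
proof
  fix k
  have "U (- k) + J (- k) + J (- k + s) + (U (- k + 1) + J (- k + 1) + J (- k + 1 + s)) + V (- k) +
      V (- k + s) = 0"
    using assms unfolding cocycle_def by blast
  moreover have "- (k - s) = - k + s" "1 - (k - s) = - k + 1 + s" "- (k - 1) = - k + 1" "1 - k = - k + 1"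
    by simp_all
  ultimately show "V (- k) + J (- k) + J (1 - k) + (V (- (k - s)) + J (- (k - s)) + J (1 - (k - s))) +
      U (- k) + U (- (k - 1)) = 0"
    by (simp only: bit_cancel)
qed

lemma coboundary_if_reflect_boundary:
  fixes U V J C :: "int \<Rightarrow> bit"
  assumes V: "\<And>k. V (- k) + J (- k) + J (1 - k) = C k + C (k - 1)"
    and U: "\<And>k. U (- k) = C k + C (k - s)"
  shows "(\<lambda>k. U k + J k + J (k + s)) = (\<lambda>k. C (- k) + J k + (C (- (k + s)) + J (k + s)))"
    and "V = (\<lambda>k. C (- k) + J k + (C (- (k + 1)) + J (k + 1)))"
proof -
  show "(\<lambda>k. U k + J k + J (k + s)) = (\<lambda>k. C (- k) + J k + (C (- (k + s)) + J (k + s)))"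
  proof
    fix k
    have "U k = C (- k) + C (- k - s)"
      using U[of "- k", unfolded minus_minus] .
    then show "U k + J k + J (k + s) = C (- k) + J k + (C (- (k + s)) + J (k + s))"
      by (simp only: ac_simps minus_add_distrib diff_conv_add_uminus)
  qed
  show "V = (\<lambda>k. C (- k) + J k + (C (- (k + 1)) + J (k + 1)))"
  proof
    fix k
    have "V k + J k + J (1 + k) + (C (- k) + C (- k - 1)) = 0"
      using V[of "- k", unfolded minus_minus diff_minus_eq_add] by (simp only: bit_add_eq_0_iff)
    then show "V k = C (- k) + J k + (C (- (k + 1)) + J (k + 1))"
      by (subst bit_add_eq_0_iff[symmetric]) (simp only: bit_cancel minus_add_distrib diff_conv_add_uminus)
  qed
qed

lemma coeff_fun_reflect_hook:
  assumes n: "1 < n" and v: "v \<subseteq> {0..<n}" and j: "j \<subseteq> {0..<n}"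
  shows "coeff_fun n (radd (reflect n v) (rmul n (reflect n j) {0, 1})) =
    (\<lambda>k. coeff_fun n v (- k) + coeff_fun n j (- k) + coeff_fun n j (1 - k))"
proof -
  have n0: "n > 0"
    using n by simp
  have "coeff_fun n (radd (reflect n v) (rmul n (reflect n j) {0, 1})) =
      (\<lambda>k. coeff_fun n (reflect n v) k + coeff_fun n (reflect n j) k +
        coeff_fun n (reflect n j) (k - int 1))"
    using n by (intro coeff_fun_radd_rmul_binomial[OF reflect_subset[OF n0]]) auto
  then show ?thesis
    unfolding coeff_fun_reflect[OF v n0] coeff_fun_reflect[OF j n0] of_nat_1 minus_diff_eq .
qed

lemma C1_reflect_if_C1':
  assumes d: "d + 1 < n" and u: "u \<subseteq> {0..<n}" and v: "v \<subseteq> {0..<n}" and j: "j \<subseteq> {0..<n}"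
    and Z: "(radd u (rmul n j {0, n - (d + 1)}), v) \<in> C1' n d"
  shows "(radd (reflect n v) (rmul n (reflect n j) {0, 1}), reflect n u) \<in> C1 n d"
proof -
  have n: "n > 0" "1 < n" "0 < d + 1"
    using d by simp_all
  have u': "coeff_fun n (reflect n u) = (\<lambda>k. coeff_fun n u (- k))"
    using coeff_fun_reflect[OF u n(1)] by (rule ext)
  have "cocycle (int (d + 1)) (coeff_fun n (radd u (rmul n j {0, n - (d + 1)}))) (coeff_fun n v)"
    using Z C1'_iff_cocycle[OF d] by blast
  then have "cycle (int (d + 1)) (coeff_fun n (radd (reflect n v) (rmul n (reflect n j) {0, 1})))
      (coeff_fun n (reflect n u))"
    unfolding coeff_fun_radd_rmul_binomial_inv[OF j n(3) d] coeff_fun_reflect_hook[OF n(2) v j] u'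
    by (rule cycle_reflect_cocycle)
  then show ?thesis
    using C1_iff_cycle[OF d] n by (simp add: radd_subset reflect_subset rmul_subset)
qed

lemma C2'_if_C2_reflect:
  assumes d: "d + 1 < n" and u: "u \<subseteq> {0..<n}" and v: "v \<subseteq> {0..<n}" and j: "j \<subseteq> {0..<n}"
    and "(radd (reflect n v) (rmul n (reflect n j) {0, 1}), reflect n u) \<in> C2 n d"
  shows "(radd u (rmul n j {0, n - (d + 1)}), v) \<in> C2' n d"
proof -
  have n: "n > 0" "1 < n" "0 < d + 1"
    using d by simp_all
  obtain C where C: "periodic n C"
    and YC: "coeff_fun n (radd (reflect n v) (rmul n (reflect n j) {0, 1})) = (\<lambda>k. C k + C (k - 1))"
    and uC: "coeff_fun n (reflect n u) = (\<lambda>k. C k + C (k - int (d + 1)))"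
    using assms(5) C2_iff_boundary[OF d] n by (auto simp: radd_subset reflect_subset rmul_subset)
  define D where "D k = C (- k) + coeff_fun n j k" for k
  have "periodic n D"
    unfolding D_def[abs_def] by (rule periodic_add[OF periodic_reflect[OF C] periodic_coeff_fun])
  moreover have "coeff_fun n v (- k) + coeff_fun n j (- k) + coeff_fun n j (1 - k) = C k + C (k - 1)"
    and "coeff_fun n u (- k) = C k + C (k - int (d + 1))" for k
    using fun_cong[OF YC, of k] fun_cong[OF uC, of k]
    unfolding coeff_fun_reflect_hook[OF n(2) v j] coeff_fun_reflect[OF u n(1)] by simp_all
  then have "coeff_fun n (radd u (rmul n j {0, n - (d + 1)})) = (\<lambda>k. D k + D (k + int (d + 1)))"
    "coeff_fun n v = (\<lambda>k. D k + D (k + 1))"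
    unfolding coeff_fun_radd_rmul_binomial_inv[OF j n(3) d] D_def
    by (rule coboundary_if_reflect_boundary)+
  ultimately show ?thesis
    by (rule C2'_if_coboundary[OF d radd_subset[OF u rmul_subset] v])
qed

lemma reflect_Z_logical:
  assumes "d + 1 < n" "u \<subseteq> {0..<n}" "v \<subseteq> {0..<n}" "j \<subseteq> {0..<n}"
    and "(radd u (rmul n j {0, n - (d + 1)}), v) \<in> C1' n d - C2' n d"
  shows "(radd (reflect n v) (rmul n (reflect n j) {0, 1}), reflect n u) \<in> C1 n d - C2 n d"
  using C1_reflect_if_C1'[OF assms(1-4)] C2'_if_C2_reflect[OF assms(1-4)] assms(5) by blast

section \<open>The code with \<open>d = 2 m\<close>\<close>

lemma finite_eff_weights: "finite (eff_weights n d)"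
proof (rule finite_subset)
  show "eff_weights n d \<subseteq> {..3 * n}"
  proof
    fix w assume "w \<in> eff_weights n d"
    then obtain j u v where w: "w = card j + card u + card v"
      and "j \<subseteq> {0..<n}" "u \<subseteq> {0..<n}" "v \<subseteq> {0..<n}"
      unfolding eff_weights_def Rn_def wt_def by blast
    then have "card j \<le> n" "card u \<le> n" "card v \<le> n"
      using card_mono[of "{0..<n}"] by fastforce+
    then show "w \<in> {..3 * n}"
      unfolding w by simp
  qed
qed simp

lemma weight_bound_of_square_bound:
  fixes m U V J :: nat
  assumes m: "2 \<le> m" and bound: "2 * m * m \<le> m * U + m * V + 2 * J"
  shows "2 * m \<le> U + V + J"
proof -
  have "2 * J \<le> m * J"
    using m by (rule mult_right_mono) simp
  moreover have "m * (2 * m) = 2 * m * m" "m * (U + V + J) = m * U + m * V + m * J"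
    by (simp_all add: algebra_simps)
  ultimately have "m * (2 * m) \<le> m * (U + V + J)"
    using bound by linarith
  then show ?thesis
    using m by simp
qed

text \<open>Add \<open>m - 1\<close> times the first bound to the second.\<close>

lemma weight_bound_of_square_bounds:
  fixes m U V J :: nat
  assumes m: "2 \<le> m" and A: "2 * m * m \<le> (m + 1) * U + (m - 1) * V + 2 * J"
    and B: "2 * m * m \<le> U + (2 * m - 1) * V + 2 * J"
  shows "2 * m \<le> U + V + J"
proof -
  obtain k where k: "m = k + 2"
    using m by (metis add.commute le_Suc_ex)
  have A': "2 * (k + 2) * (k + 2) \<le> (k + 3) * U + (k + 1) * V + 2 * J"
    and B': "2 * (k + 2) * (k + 2) \<le> U + (2 * k + 3) * V + 2 * J"
    using A B unfolding k by (simp_all add: algebra_simps)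
  have "(k + 1) * (2 * (k + 2) * (k + 2)) \<le> (k + 1) * ((k + 3) * U + (k + 1) * V + 2 * J)"
    using A' by (rule mult_left_mono) simp
  then have "(k + 2) * (k + 2) * (2 * (k + 2)) \<le>
      (k + 2) * (k + 2) * U + (k + 2) * (k + 2) * V + 2 * (k + 2) * J"
    using B' by (simp add: algebra_simps)
  also have "\<dots> \<le> (k + 2) * (k + 2) * (U + V + J)"
    by (simp add: algebra_simps)
  finally show ?thesis
    unfolding k by (simp only: mult_le_cancel1) simp
qed

locale gb_code =
  fixes m :: nat
  assumes two_le_m: "2 \<le> m"
begin

definition n :: nat where
  "n = 2 * m * m"

definition s :: nat where
  "s = 2 * m + 1"

lemma n_pos: "n > 0"
  using two_le_m by (simp add: n_def)

lemma s_pos: "s > 0"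
  by (simp add: s_def)

lemma s_less_n: "s < n"
proof -
  obtain k where "m = k + 2"
    using two_le_m by (metis add.commute le_Suc_ex)
  then show ?thesis
    unfolding n_def s_def by (simp add: algebra_simps)
qed

lemma Suc_2m_less_n: "2 * m + 1 < n"
  using s_less_n by (simp add: s_def)

lemma Suc_m_less_n: "m + 1 < n"
  using s_less_n by (simp add: s_def)

lemma coprime_s_n: "coprime s n"
proof -
  have "coprime (2 * m + 1) m"
    using gcd_add_mult[of m 2 1] by (simp add: coprime_iff_gcd_eq_1 gcd.commute)
  moreover have "coprime (2 * m + 1) 2"
    by simp
  ultimately show ?thesis
    unfolding n_def s_def by (simp add: coprime_mult_right_iff)
qed

lemma m_mult_s_mod: "(m * s) mod n = m"
proof -
  have "m * s = n + m"
    by (simp add: n_def s_def algebra_simps)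
  then show ?thesis
    using Suc_m_less_n by simp
qed

lemma one_plus_m_mult_s: "1 + m * s = n + (m + 1)"
  by (simp add: n_def s_def algebra_simps)

lemma one_plus_m_mult_s_mod: "(1 + m * s) mod n = m + 1"
proof -
  have "(1 + m * s) mod n = (n + (m + 1)) mod n"
    by (simp only: one_plus_m_mult_s)
  also have "\<dots> = (m + 1) mod n"
    by (rule mod_add_self1)
  also have "\<dots> = m + 1"
    by (rule mod_less[OF Suc_m_less_n])
  finally show ?thesis .
qed

lemma Suc_m_plus_pred_m_mult_s: "m + 1 + (m - 1) * s = n"
proof -
  obtain k where "m = k + 1"
    using two_le_m by (metis add.commute le_Suc_ex le_trans one_le_numeral)
  then show ?thesis
    unfolding n_def s_def by (simp add: algebra_simps)
qed

lemma one_plus_pred_2m_mult_s: "1 + (2 * m - 1) * s = 2 * n"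
proof -
  obtain k where "m = k + 1"
    using two_le_m by (metis add.commute le_Suc_ex le_trans one_le_numeral)
  then show ?thesis
    unfolding n_def s_def by (simp add: algebra_simps)
qed

lemma mult_s_plus_m_less_n: "i \<le> m - 1 \<Longrightarrow> i * s + m < n"
proof -
  assume "i \<le> m - 1"
  then have "i * s \<le> (m - 1) * s"
    by (rule mult_le_mono1)
  moreover obtain k where "m = k + 2"
    using two_le_m by (metis add.commute le_Suc_ex)
  then have "(m - 1) * s + m < n"
    unfolding n_def s_def by (simp add: algebra_simps)
  ultimately show ?thesis
    by linarith
qed

lemma Suc_m_plus_mult_s_less_n: "i \<le> m - 2 \<Longrightarrow> m + 1 + i * s < n"
proof -
  assume "i \<le> m - 2"
  then have "i * s \<le> (m - 2) * s"
    by (rule mult_le_mono1)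
  moreover obtain k where "m = k + 2"
    using two_le_m by (metis add.commute le_Suc_ex)
  then have "m + 1 + (m - 2) * s < n"
    unfolding n_def s_def by (simp add: algebra_simps)
  ultimately show ?thesis
    by linarith
qed

lemma one_plus_mult_s_between_n_2n:
  assumes "m + 1 \<le> i" "i \<le> 2 * m - 2"
  shows "n + s \<le> 1 + i * s" "1 + i * s < 2 * n"
proof -
  obtain k where k: "m = k + 2"
    using two_le_m by (metis add.commute le_Suc_ex)
  have "(m + 1) * s \<le> i * s"
    using assms(1) by (rule mult_le_mono1)
  moreover have "i * s \<le> (2 * m - 2) * s"
    using assms(2) by (rule mult_le_mono1)
  moreover have "n + s \<le> 1 + (m + 1) * s" "1 + (2 * m - 2) * s < 2 * n"
    using k unfolding n_def s_def by (simp_all add: algebra_simps)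
  ultimately show "n + s \<le> 1 + i * s" "1 + i * s < 2 * n"
    by linarith+
qed

text \<open>Three Z-logical operators \<open>(a\<^sub>i, b\<^sub>i)\<close>: an interval \<open>a\<^sub>i\<close> and an arithmetic progression
  \<open>b\<^sub>i\<close> of step \<open>s\<close>, chosen so that \<open>a\<^sub>i (1 + x\<^sup>-\<^sup>1)\<close> and \<open>b\<^sub>i (1 + x\<^sup>-\<^sup>s)\<close> are the same
  binomial.\<close>

definition a1 :: "nat set" where "a1 = {1..m}"

definition b1 :: "nat set" where "b1 = arith_prog n s 0 1 m"

definition a2 :: "nat set" where "a2 = {1..m + 1}"

definition b2 :: "nat set" where "b2 = arith_prog n s (m + 1) 1 (m - 1)"

definition a3 :: "nat set" where "a3 = {1..1}"

definition b3 :: "nat set" where "b3 = arith_prog n s 1 1 (2 * m - 1)"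

lemma a_b_subset:
  "a1 \<subseteq> {0..<n}" "a2 \<subseteq> {0..<n}" "a3 \<subseteq> {0..<n}" "b1 \<subseteq> {0..<n}" "b2 \<subseteq> {0..<n}" "b3 \<subseteq> {0..<n}"
  unfolding a1_def a2_def a3_def b1_def b2_def b3_def using Suc_m_less_n arith_prog_subset[OF n_pos]
  by auto

lemma zero_notin_a: "0 \<notin> a1" "0 \<notin> a2" "0 \<notin> a3"
  by (simp_all add: a1_def a2_def a3_def)

lemma card_a: "card a1 = m" "card a2 = m + 1" "card a3 = 1"
  by (simp_all add: a1_def a2_def a3_def)

lemma jump_count_a: "jump_count n a1 = 2" "jump_count n a2 = 2" "jump_count n a3 = 2"
  unfolding a1_def a2_def a3_def by (rule jump_count_atLeastAtMost; use two_le_m Suc_m_less_n in simp)+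

lemma cocycle_a1_b1: "cocycle (int s) (coeff_fun n a1) (coeff_fun n b1)"
  unfolding cocycle_def
proof
  fix k
  have "coeff_fun n a1 k + coeff_fun n a1 (k + 1) = delta n 0 k + delta n (int m) k"
    unfolding a1_def using coeff_fun_atLeastAtMost_step[of 1 m n k] two_le_m Suc_m_less_n by simp
  moreover have "coeff_fun n b1 k + coeff_fun n b1 (k + int s) = delta n 0 k + delta n (int m) k"
    unfolding b1_def
    using coeff_fun_arith_prog_step[OF coprime_s_n, of 1 m 0 k] two_le_m Suc_m_less_n m_mult_s_mod by simp
  ultimately show "coeff_fun n a1 k + coeff_fun n a1 (k + 1) + coeff_fun n b1 k +
      coeff_fun n b1 (k + int s) = 0"
    by (metis add.assoc bit_add_self)
qed

lemma cocycle_a2_b2: "cocycle (int s) (coeff_fun n a2) (coeff_fun n b2)"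
  unfolding cocycle_def
proof
  fix k
  have "coeff_fun n a2 k + coeff_fun n a2 (k + 1) = delta n 0 k + delta n (int (m + 1)) k"
    unfolding a2_def using coeff_fun_atLeastAtMost_step[of 1 "m + 1" n k] Suc_m_less_n by simp
  moreover have "coeff_fun n b2 k + coeff_fun n b2 (k + int s) = delta n (int (m + 1)) k + delta n 0 k"
    unfolding b2_def
    using coeff_fun_arith_prog_step[OF coprime_s_n, of 1 "m - 1" "m + 1" k] two_le_m Suc_m_less_n
      Suc_m_plus_pred_m_mult_s
    by simp
  ultimately show "coeff_fun n a2 k + coeff_fun n a2 (k + 1) + coeff_fun n b2 k +
      coeff_fun n b2 (k + int s) = 0"
    by (metis add.assoc add.commute bit_add_self)
qed

lemma cocycle_a3_b3: "cocycle (int s) (coeff_fun n a3) (coeff_fun n b3)"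
  unfolding cocycle_def
proof
  fix k
  have "coeff_fun n a3 k + coeff_fun n a3 (k + 1) = delta n 0 k + delta n 1 k"
    unfolding a3_def using coeff_fun_atLeastAtMost_step[of 1 1 n k] Suc_m_less_n by simp
  moreover have "coeff_fun n b3 k + coeff_fun n b3 (k + int s) = delta n 1 k + delta n 0 k"
    unfolding b3_def
    using coeff_fun_arith_prog_step[OF coprime_s_n, of 1 "2 * m - 1" 1 k] two_le_m s_less_n
      one_plus_pred_2m_mult_s
    by (simp add: s_def)
  ultimately show "coeff_fun n a3 k + coeff_fun n a3 (k + 1) + coeff_fun n b3 k +
      coeff_fun n b3 (k + int s) = 0"
    by (metis add.assoc add.commute bit_add_self)
qed

lemma b1_Int_below_s: "b1 \<inter> {0..<s} = {m}"
proof (intro set_eqI iffI)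
  fix x assume "x \<in> b1 \<inter> {0..<s}"
  then obtain i where i: "1 \<le> i" "i \<le> m" and x: "x = (i * s) mod n" "x < s"
    unfolding b1_def arith_prog_def by auto
  show "x \<in> {m}"
  proof (cases "i = m")
    case True
    then show ?thesis
      using x m_mult_s_mod by simp
  next
    case False
    then have "i \<le> m - 1"
      using i by simp
    then have "i * s < n"
      using mult_s_plus_m_less_n by fastforce
    then have "x = i * s"
      using x(1) by simp
    moreover have "s \<le> i * s"
      using i(1) by simp
    ultimately have "s \<le> x"
      by linarith
    then show ?thesis
      using x(2) by simp
  qed
next
  fix x assume "x \<in> {m}"
  moreover have "m \<in> b1"
    unfolding b1_def arith_prog_def using two_le_m m_mult_s_mod by (auto intro!: image_eqI[of _ _ m])
  ultimately show "x \<in> b1 \<inter> {0..<s}"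
    by (simp add: s_def)
qed

lemma b2_Int_below_s: "b2 \<inter> {0..<s} = {0}"
proof (intro set_eqI iffI)
  fix x assume "x \<in> b2 \<inter> {0..<s}"
  then obtain i where i: "1 \<le> i" "i \<le> m - 1" and x: "x = (m + 1 + i * s) mod n" "x < s"
    unfolding b2_def arith_prog_def by auto
  show "x \<in> {0}"
  proof (cases "i = m - 1")
    case True
    then show ?thesis
      using x Suc_m_plus_pred_m_mult_s by simp
  next
    case False
    then have "i \<le> m - 2"
      using i by simp
    then have "m + 1 + i * s < n"
      by (rule Suc_m_plus_mult_s_less_n)
    then have "x = m + 1 + i * s"
      using x(1) by simp
    moreover have "s \<le> i * s"
      using i(1) by simp
    ultimately have "s \<le> x"
      by linarith
    then show ?thesis
      using x(2) by simp
  qed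
next
  fix x :: nat assume "x \<in> {0}"
  moreover have "0 \<in> b2"
    unfolding b2_def arith_prog_def using two_le_m Suc_m_plus_pred_m_mult_s
    by (auto intro!: image_eqI[of _ _ "m - 1"])
  ultimately show "x \<in> b2 \<inter> {0..<s}"
    using s_pos by simp
qed

lemma b3_term_below_s:
  assumes i: "1 \<le> i" "i \<le> 2 * m - 1" and below: "(1 + i * s) mod n < s"
  shows "(1 + i * s) mod n \<in> {0, m + 1}"
proof -
  consider "i \<le> m - 1" | "i = m" | "m + 1 \<le> i" "i \<le> 2 * m - 2" | "i = 2 * m - 1"
    using i two_le_m by linarith
  then show ?thesis
  proof cases
    case 1
    then have "1 + i * s < n"
      using mult_s_plus_m_less_n[of i] two_le_m by simp
    then have "(1 + i * s) mod n = 1 + i * s"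
      by simp
    moreover have "s \<le> i * s"
      using i(1) by simp
    ultimately show ?thesis
      using below by linarith
  next
    case 2
    then show ?thesis
      using one_plus_m_mult_s_mod by simp
  next
    case 3
    then have "(1 + i * s) mod n = 1 + i * s - n"
      using one_plus_mult_s_between_n_2n[OF 3] by (simp add: le_mod_geq)
    then show ?thesis
      using below one_plus_mult_s_between_n_2n[OF 3] by simp
  next
    case 4
    then show ?thesis
      using one_plus_pred_2m_mult_s by simp
  qed
qed

lemma b3_Int_below_s: "b3 \<inter> {0..<s} = {0, m + 1}"
proof (intro set_eqI iffI)
  fix x assume "x \<in> b3 \<inter> {0..<s}"
  then obtain i where i: "1 \<le> i" "i \<le> 2 * m - 1" and x: "x = (1 + i * s) mod n" "x < s"
    unfolding b3_def arith_prog_def by auto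
  then show "x \<in> {0, m + 1}"
    using b3_term_below_s[OF i] by simp
next
  fix x assume x: "x \<in> {0, m + 1}"
  have "0 \<in> b3"
    unfolding b3_def arith_prog_def using two_le_m one_plus_pred_2m_mult_s
    by (auto intro!: image_eqI[of _ _ "2 * m - 1"])
  moreover have "m + 1 \<in> b3"
    unfolding b3_def arith_prog_def using two_le_m one_plus_m_mult_s_mod
    by (auto intro!: image_eqI[of _ _ m])
  moreover have "m + 1 < s"
    using two_le_m by (simp add: s_def)
  ultimately show "x \<in> b3 \<inter> {0..<s}"
    using x s_pos by auto
qed

lemma card_b1: "card b1 = m"
  unfolding b1_def using card_arith_prog[OF coprime_s_n, of m 0 1] Suc_m_less_n by simp

lemma card_b2: "card b2 = m - 1"
  unfolding b2_def using card_arith_prog[OF coprime_s_n, of "m - 1" "m + 1" 1] Suc_m_less_n by simp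

lemma card_b3: "card b3 = 2 * m - 1"
  unfolding b3_def using card_arith_prog[OF coprime_s_n, of "2 * m - 1" 1 1] s_less_n
  by (simp add: s_def)

lemma odd_pairings_if_nontrivial_cycle:
  assumes "(u, v) \<in> C1 n (2 * m) - C2 n (2 * m)"
  shows "odd_pairings n u v a1 b1 \<or> odd_pairings n u v a2 b2 \<and> odd_pairings n u v a3 b3"
proof -
  obtain p w :: bit where pw: "p \<noteq> 0 \<or> w \<noteq> 0" and pairing: "\<And>a b.
      cocycle (int (2 * m + 1)) (coeff_fun n a) (coeff_fun n b) \<Longrightarrow> 0 \<notin> a \<Longrightarrow> b \<subseteq> {0..<n} \<Longrightarrow>
      odd_pairings n u v a b \<longleftrightarrow> p * of_nat (card (b \<inter> {0..<2 * m + 1})) + w * of_nat (card b) = 1"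
    by (rule nontrivial_cycle_pairings[OF Suc_2m_less_n assms]) (rule that)
  note odd = pairing[folded s_def, OF cocycle_a1_b1 zero_notin_a(1) a_b_subset(4)]
    pairing[folded s_def, OF cocycle_a2_b2 zero_notin_a(2) a_b_subset(5)]
    pairing[folded s_def, OF cocycle_a3_b3 zero_notin_a(3) a_b_subset(6)]
  have "(of_nat (m - 1) :: bit) = of_nat m + 1" "(of_nat (2 * m - 1) :: bit) = 1"
    using two_le_m by (simp_all add: of_nat_diff)
  then have "odd_pairings n u v a1 b1 \<longleftrightarrow> p + w * of_nat m = 1"
    "odd_pairings n u v a2 b2 \<longleftrightarrow> p + w * (of_nat m + 1) = 1"
    "odd_pairings n u v a3 b3 \<longleftrightarrow> w = 1"
    unfolding odd b1_Int_below_s b2_Int_below_s b3_Int_below_s card_b1 card_b2 card_b3 by simp_all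
  then show ?thesis
    using pw by (cases p; cases w; cases "of_nat m :: bit") auto
qed

lemma X_weight_bound:
  assumes j: "j \<subseteq> {0..<n}" and u: "u \<subseteq> {0..<n}" and v: "v \<subseteq> {0..<n}"
    and X: "(radd u (rmul n j (radd (rone n) (xpow n 1))), v) \<in> C1 n (2 * m) - C2 n (2 * m)"
  shows "2 * m \<le> card j + card u + card v"
proof -
  have "radd (rone n) (xpow n 1) = {0, 1}"
    using Suc_m_less_n by (intro radd_rone_xpow) auto
  then have odd: "odd_pairings n (radd u (rmul n j {0, 1})) v a1 b1 \<or>
      odd_pairings n (radd u (rmul n j {0, 1})) v a2 b2 \<and>
      odd_pairings n (radd u (rmul n j {0, 1})) v a3 b3"
    using odd_pairings_if_nontrivial_cycle X by simp
  have "1 < n"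
    using Suc_m_less_n by simp
  note bound = card_bound_if_odd_pairings[OF this _ _ u v j]
  from odd show ?thesis
  proof
    assume "odd_pairings n (radd u (rmul n j {0, 1})) v a1 b1"
    then have "2 * m * m \<le> m * card u + m * card v + 2 * card j"
      using bound[OF a_b_subset(1,4)] jump_count_a card_a card_b1 by (simp add: n_def)
    from weight_bound_of_square_bound[OF two_le_m this] show ?thesis
      by linarith
  next
    assume "odd_pairings n (radd u (rmul n j {0, 1})) v a2 b2 \<and>
      odd_pairings n (radd u (rmul n j {0, 1})) v a3 b3"
    then have "2 * m * m \<le> (m + 1) * card u + (m - 1) * card v + 2 * card j"
      and "2 * m * m \<le> card u + (2 * m - 1) * card v + 2 * card j"
      using bound[OF a_b_subset(2,5)] bound[OF a_b_subset(3,6)] jump_count_a card_a card_b2 card_b3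
      by (simp_all add: n_def)
    from weight_bound_of_square_bounds[OF two_le_m this] show ?thesis
      by linarith
  qed
qed

lemma Z_weight_bound:
  assumes j: "j \<subseteq> {0..<n}" and u: "u \<subseteq> {0..<n}" and v: "v \<subseteq> {0..<n}"
    and Z: "(radd u (rmul n j (radd (rone n) (xinvpow n (2 * m + 1)))), v) \<in>
      C1' n (2 * m) - C2' n (2 * m)"
  shows "2 * m \<le> card j + card u + card v"
proof -
  have "radd (rone n) (xinvpow n (2 * m + 1)) = {0, n - (2 * m + 1)}"
    using Suc_2m_less_n by (intro radd_rone_xinvpow) auto
  moreover have "radd (rone n) (xpow n 1) = {0, 1}"
    using Suc_m_less_n by (intro radd_rone_xpow) auto
  ultimately have "(radd (reflect n v) (rmul n (reflect n j) (radd (rone n) (xpow n 1))), reflect n u)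
      \<in> C1 n (2 * m) - C2 n (2 * m)"
    using reflect_Z_logical[OF Suc_2m_less_n u v j] Z by simp
  then have "2 * m \<le> card (reflect n j) + card (reflect n v) + card (reflect n u)"
    using X_weight_bound reflect_subset[OF n_pos] by blast
  then show ?thesis
    using card_reflect j u v by simp
qed

text \<open>A nontrivial X-logical operator of weight \<open>2 m\<close>: \<open>v = x + \<dots> + x\<^sup>m\<close> and
  \<open>u = x (1 + x\<^sup>s + \<dots> + x\<^sup>(\<^sup>m\<^sup>-\<^sup>1\<^sup>)\<^sup>s)\<close>, so that \<open>u (1 + x\<^sup>s) = v (1 + x) = x + x\<^sup>m\<^sup>+\<^sup>1\<close> because
  \<open>m s = n + m\<close>. The terms of \<open>u\<close> are written as \<open>x\<^sup>n\<^sup>-\<^sup>s\<^sup>+\<^sup>1\<^sup>+\<^sup>i\<^sup>s\<close> for \<open>i = 1, \<dots>, m\<close>, so that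
  \<open>coeff_fun_arith_prog_step\<close> applies.\<close>

definition min_logical_u :: "nat set" where
  "min_logical_u = arith_prog n s (n - s + 1) 1 m"

definition min_logical_v :: "nat set" where
  "min_logical_v = {1..m}"

lemma min_logical_u_term:
  assumes "1 \<le> i" "i \<le> m"
  shows "(n - s + 1 + i * s) mod n = 1 + (i - 1) * s"
proof -
  have "i * s = s + (i - 1) * s"
    using assms by (cases i) auto
  then have "n - s + 1 + i * s = n + (1 + (i - 1) * s)"
    using s_less_n by simp
  moreover have "i - 1 \<le> m - 1"
    using assms by simp
  then have "1 + (i - 1) * s < n"
    using mult_s_plus_m_less_n two_le_m by fastforce
  moreover have "(n + (1 + (i - 1) * s)) mod n = 1 + (i - 1) * s"
    using \<open>1 + (i - 1) * s < n\<close> by (simp only: mod_add_self1 mod_less)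
  ultimately show ?thesis
    by simp
qed

lemma min_logical_u_step:
  "coeff_fun n min_logical_u (k - int s) + coeff_fun n min_logical_u k =
    delta n 1 k + delta n (int (m + 1)) k"
proof -
  have first: "n - s + 1 < n"
    using s_less_n two_le_m by (simp add: s_def)
  have last: "1 + (m - 1) * s < n"
    using mult_s_plus_m_less_n[of "m - 1"] two_le_m by simp
  have "(n - s + 1 + (1 - 1) * s) mod n = n - s + 1" "(n - s + 1 + m * s) mod n = 1 + (m - 1) * s"
    using first min_logical_u_term[of m] two_le_m by simp_all
  then have "coeff_fun n min_logical_u (k - int s) + coeff_fun n min_logical_u (k - int s + int s) =
      delta n (int (n - s + 1)) (k - int s) + delta n (int (1 + (m - 1) * s)) (k - int s)"
    unfolding min_logical_u_def
    using coeff_fun_arith_prog_step[OF coprime_s_n, of 1 m "n - s + 1" "k - int s"] two_le_m Suc_m_less_n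
    by simp
  moreover have "delta n (int (n - s + 1)) (k - int s) = delta n 1 k"
  proof -
    have "n - s + 1 + s = n + 1" "1 < n"
      using s_less_n Suc_m_less_n by simp_all
    then have "(n - s + 1 + s) mod n = 1"
      by (simp only: mod_add_self1 mod_less)
    then show ?thesis
      using delta_shift[OF first, of k s] by (simp only: of_nat_1)
  qed
  moreover have "delta n (int (1 + (m - 1) * s)) (k - int s) = delta n (int (m + 1)) k"
  proof -
    have "1 + (m - 1) * s + s = 1 + m * s"
      using two_le_m by (cases m) auto
    then have "(1 + (m - 1) * s + s) mod n = m + 1"
      using one_plus_m_mult_s_mod by simp
    then show ?thesis
      using delta_shift[OF last, of k s] by (simp only:)
  qed
  ultimately show ?thesis
    by simp
qed

lemma min_logical_v_step:
  "coeff_fun n min_logical_v (k - 1) + coeff_fun n min_logical_v k =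
    delta n 1 k + delta n (int (m + 1)) k"
proof -
  have "coeff_fun n min_logical_v (k - 1) + coeff_fun n min_logical_v (k - 1 + 1) =
      delta n (int 1 - 1) (k - 1) + delta n (int m) (k - 1)"
    unfolding min_logical_v_def by (rule coeff_fun_atLeastAtMost_step) (use two_le_m Suc_m_less_n in auto)
  moreover have "delta n (int 1 - 1) (k - 1) = delta n 1 k"
    "delta n (int m) (k - 1) = delta n (int (m + 1)) k"
    using delta_shift[of 0 n k 1] delta_shift[of m n k 1] Suc_m_less_n by simp_all
  ultimately show ?thesis
    by simp
qed

lemma cycle_min_logical: "cycle (int s) (coeff_fun n min_logical_u) (coeff_fun n min_logical_v)"
  unfolding cycle_def using min_logical_u_step min_logical_v_step
  by (metis add.commute add.assoc bit_add_self)

lemma min_logical_subset: "min_logical_u \<subseteq> {0..<n}" "min_logical_v \<subseteq> {0..<n}"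
  unfolding min_logical_u_def min_logical_v_def using arith_prog_subset[OF n_pos] Suc_m_less_n by auto

lemma min_logical_u_Int_a2: "min_logical_u \<inter> a2 = {1}"
proof (intro set_eqI iffI)
  fix x assume "x \<in> min_logical_u \<inter> a2"
  then obtain i where i: "1 \<le> i" "i \<le> m" and x: "x = 1 + (i - 1) * s" "x \<le> m + 1"
    unfolding min_logical_u_def arith_prog_def a2_def using min_logical_u_term by auto
  have "i = 1"
  proof (rule ccontr)
    assume "i \<noteq> 1"
    then have "1 * s \<le> (i - 1) * s"
      using i by (intro mult_le_mono1) simp
    then show False
      using x by (simp add: s_def)
  qed
  then show "x \<in> {1}"
    using x by simp
next
  fix x :: nat assume "x \<in> {1}"
  moreover have "1 \<in> min_logical_u"
    unfolding min_logical_u_def arith_prog_def using min_logical_u_term[of 1] two_le_m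
    by (auto intro!: image_eqI[of _ _ 1])
  ultimately show "x \<in> min_logical_u \<inter> a2"
    by (simp add: a2_def)
qed

lemma min_logical_v_Int_b2: "min_logical_v \<inter> b2 = {}"
proof -
  have "x \<notin> b2" if "x \<in> min_logical_v" for x
  proof
    assume "x \<in> b2"
    moreover have "x < s" "x \<noteq> 0"
      using that by (auto simp: min_logical_v_def s_def)
    ultimately show False
      using b2_Int_below_s by (metis IntI atLeastLessThan_iff singletonD zero_le)
  qed
  then show ?thesis
    by blast
qed

lemma pairing_min_logical_a2_b2:
  "pairing n (coeff_fun n min_logical_u) (coeff_fun n min_logical_v)
    (coeff_fun n a2) (coeff_fun n b2) = 1"
  using pairing_coeff_fun[OF min_logical_subset] min_logical_u_Int_a2 min_logical_v_Int_b2 by simp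

lemma min_logical_nontrivial: "(min_logical_u, min_logical_v) \<in> C1 n (2 * m) - C2 n (2 * m)"
proof -
  have "(min_logical_u, min_logical_v) \<in> C1 n (2 * m)"
    using C1_iff_cycle[OF Suc_2m_less_n] min_logical_subset cycle_min_logical by (simp add: s_def)
  moreover have "(min_logical_u, min_logical_v) \<notin> C2 n (2 * m)"
  proof
    assume "(min_logical_u, min_logical_v) \<in> C2 n (2 * m)"
    then obtain C where C: "periodic n C" and "coeff_fun n min_logical_u = (\<lambda>k. C k + C (k - 1))"
      "coeff_fun n min_logical_v = (\<lambda>k. C k + C (k - int s))"
      using C2_iff_boundary[OF Suc_2m_less_n min_logical_subset] by (auto simp: s_def)
    then have "pairing n (coeff_fun n min_logical_u) (coeff_fun n min_logical_v)
        (coeff_fun n a2) (coeff_fun n b2) = 0"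
      using pairing_boundary_cocycle[OF n_pos C periodic_coeff_fun periodic_coeff_fun cocycle_a2_b2]
      by simp
    then show False
      using pairing_min_logical_a2_b2 by simp
  qed
  ultimately show ?thesis
    by blast
qed

lemma card_min_logical: "card min_logical_u = m" "card min_logical_v = m"
  unfolding min_logical_u_def min_logical_v_def using card_arith_prog[OF coprime_s_n, of m] Suc_m_less_n
  by simp_all

lemma two_m_mem_eff_weights: "2 * m \<in> eff_weights n (2 * m)"
proof -
  have "radd min_logical_u (rmul n {} (radd (rone n) (xpow n 1))) = min_logical_u"
    by (simp add: rmul_def radd_def)
  then have "wt {} + wt min_logical_u + wt min_logical_v \<in> eff_weights n (2 * m)"
    unfolding eff_weights_def Rn_def using min_logical_nontrivial min_logical_subset by fastforce
  then show ?thesis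
    by (simp add: wt_def card_min_logical mult_2)
qed

lemma two_m_le_eff_weights: "w \<in> eff_weights n (2 * m) \<Longrightarrow> 2 * m \<le> w"
  unfolding eff_weights_def Rn_def wt_def using X_weight_bound Z_weight_bound by fastforce

lemma eff_dist: "eff_weights n (2 * m) \<noteq> {} \<and> eff_dist n (2 * m) = 2 * m"
  using two_m_mem_eff_weights two_m_le_eff_weights finite_eff_weights
  by (auto simp: eff_dist_def intro!: Min_eqI)

end

theorem theorem9:
  fixes d :: nat
  assumes "even d" and "d \<ge> 4"
  shows "eff_weights (d^2 div 2) d \<noteq> {} \<and> eff_dist (d^2 div 2) d = d"
proof -
  obtain m where d: "d = 2 * m"
    using assms(1) by blast
  then interpret gb_code m
    using assms(2) by unfold_locales simp
  have "d^2 div 2 = n"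
    unfolding d n_def by (simp add: power2_eq_square)
  then show ?thesis
    using eff_dist d by simp
qed

end
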